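(* Let $F$ be a non-normable locally convex space and $E,G\neq\{0\}$ locally convex spaces over $\mathbb{K}$. Equip $L(F,G)$, $L(E,F)$ and $L(E,G)$ with arbitrary locally convex vector topologies such that, for some $\lambda\in E'$ and $x\in E$ with $\lambda(x)\neq 0$, the maps $F\to L(E,F)$, $y\mapsto y\otimes\lambda$, and $L(E,G)\to G$, $A\mapsto A(x)$, are continuous, where $(y\otimes\lambda)(z)=\lambda(z)y$. Then the composition map $L(F,G)\times L(E,F)\to L(E,G)$, $(A,B)\mapsto A\circ B$, is discontinuous.
   Context: $L(E,F)$ denotes the space of continuous linear maps $E\to F$ and $E'=L(E,\mathbb{K})$. It may be used that for a non-normable locally convex space $F$, the evaluation map $F'\times F\to\mathbb{K}$ is discontinuous for every locally convex vector topology on $F'$. *)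

theory Defs
  imports "HOL-Analysis.Analysis"
begin

text \<open>Scalars: a type 'k of class real_normed_field (i.e. the real or complex numbers).
  A vector space is given by a type with addition and an explicit scalar multiplication;
  subspaces of function spaces are given by a carrier set with explicit operations.\<close>

definition convex_in :: "('v \<Rightarrow> 'v \<Rightarrow> 'v) \<Rightarrow> ('k::real_normed_field \<Rightarrow> 'v \<Rightarrow> 'v) \<Rightarrow> 'v set \<Rightarrow> bool" where
  "convex_in add sc U \<longleftrightarrow>
     (\<forall>x\<in>U. \<forall>y\<in>U. \<forall>t::real. 0 \<le> t \<and> t \<le> 1 \<longrightarrow> add (sc (of_real t) x) (sc (of_real (1 - t)) y) \<in> U)"

text \<open>Not necessarily Hausdorff.\<close>
definition lc_vector_topology ::
  "'v set \<Rightarrow> ('v \<Rightarrow> 'v \<Rightarrow> 'v) \<Rightarrow> ('k::real_normed_field \<Rightarrow> 'v \<Rightarrow> 'v) \<Rightarrow> 'v topology \<Rightarrow> bool" where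
  "lc_vector_topology S add sc T \<longleftrightarrow>
     S \<noteq> {} \<and> (\<forall>x\<in>S. \<forall>y\<in>S. add x y \<in> S) \<and> (\<forall>c. \<forall>x\<in>S. sc c x \<in> S) \<and>
     topspace T = S \<and>
     continuous_map (prod_topology T T) T (\<lambda>(x, y). add x y) \<and>
     continuous_map (prod_topology (euclidean :: 'k topology) T) T (\<lambda>(c, x). sc c x) \<and>
     (\<forall>U x. openin T U \<and> x \<in> U \<longrightarrow> (\<exists>V. openin T V \<and> convex_in add sc V \<and> x \<in> V \<and> V \<subseteq> U))"

definition lcs :: "('k::real_normed_field \<Rightarrow> 'v::ab_group_add \<Rightarrow> 'v) \<Rightarrow> 'v topology \<Rightarrow> bool" where
  "lcs sc T \<longleftrightarrow> vector_space sc \<and> lc_vector_topology UNIV (+) sc T \<and> Hausdorff_space T"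

definition is_norm :: "('k::real_normed_field \<Rightarrow> 'v::ab_group_add \<Rightarrow> 'v) \<Rightarrow> ('v \<Rightarrow> real) \<Rightarrow> bool" where
  "is_norm sc N \<longleftrightarrow> (\<forall>x. 0 \<le> N x) \<and> (\<forall>x. N x = 0 \<longrightarrow> x = 0) \<and>
     (\<forall>c x. N (sc c x) = norm c * N x) \<and> (\<forall>x y. N (x + y) \<le> N x + N y)"

definition norm_topology :: "('v::ab_group_add \<Rightarrow> real) \<Rightarrow> 'v topology" where
  "norm_topology N = topology (\<lambda>U. \<forall>x\<in>U. \<exists>e>0. \<forall>y. N (y - x) < e \<longrightarrow> y \<in> U)"

definition normable :: "('k::real_normed_field \<Rightarrow> 'v::ab_group_add \<Rightarrow> 'v) \<Rightarrow> 'v topology \<Rightarrow> bool" where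
  "normable sc T \<longleftrightarrow> (\<exists>N. is_norm sc N \<and> T = norm_topology N)"

definition cont_lin :: "('k::real_normed_field \<Rightarrow> 'e::ab_group_add \<Rightarrow> 'e) \<Rightarrow> 'e topology \<Rightarrow>
    ('k \<Rightarrow> 'f::ab_group_add \<Rightarrow> 'f) \<Rightarrow> 'f topology \<Rightarrow> ('e \<Rightarrow> 'f) set" where
  "cont_lin sE TE sF TF = {A. Vector_Spaces.linear sE sF A \<and> continuous_map TE TF A}"

definition dual :: "('k::real_normed_field \<Rightarrow> 'e::ab_group_add \<Rightarrow> 'e) \<Rightarrow> 'e topology \<Rightarrow> ('e \<Rightarrow> 'k) set" where
  "dual sE TE = cont_lin sE TE (*) euclidean"

definition fadd :: "('e \<Rightarrow> 'f::plus) \<Rightarrow> ('e \<Rightarrow> 'f) \<Rightarrow> 'e \<Rightarrow> 'f" where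
  "fadd A B = (\<lambda>z. A z + B z)"

definition fscale :: "('k \<Rightarrow> 'f \<Rightarrow> 'f) \<Rightarrow> 'k \<Rightarrow> ('e \<Rightarrow> 'f) \<Rightarrow> 'e \<Rightarrow> 'f" where
  "fscale sc c A = (\<lambda>z. sc c (A z))"

end

theory Submission
  imports Defs "HOL-Computational_Algebra.Fundamental_Theorem_Algebra"
begin

text \<open>If composition were continuous, then, since \<open>(A \<circ> (y \<otimes> l)) x = l x \<cdot> A y\<close>, evaluation
  \<open>L(F, G) \<times> F \<rightarrow> G\<close> would be continuous. Continuity at \<open>(0, 0)\<close> yields a neighbourhood
  \<open>U\<close> of \<open>0\<close> in \<open>F\<close> on which every continuous functional \<open>f\<close> is bounded: otherwise small
  multiples of the rank-one maps \<open>f \<otimes> g\<close> would send points of \<open>U\<close> to \<open>g \<noteq> 0\<close>.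
  Weakly bounded sets are bounded (Hahn-Banach together with a gliding hump, which replaces the
  uniform boundedness principle), so \<open>U\<close> contains a bounded absolutely convex neighbourhood of
  \<open>0\<close>; its Minkowski functional is a norm inducing the topology of \<open>F\<close> (Kolmogorov).

  The scalar field is only assumed to be a real normed field. Every element of it satisfies a
  real quadratic equation, so it is \<open>\<real>\<close> or \<open>\<complex>\<close>, and real Hahn-Banach transfers to it by
  complexification.\<close>

section \<open>Real normed fields are real or complex\<close>

definition rpoly_eval :: "real poly \<Rightarrow> 'a::real_normed_field \<Rightarrow> 'a" where
  "rpoly_eval p x = poly (map_poly of_real p) x"

lemma map_poly_of_real_add:
  "map_poly (of_real :: real \<Rightarrow> 'a::real_normed_field) (p + q) = map_poly of_real p + map_poly of_real q"
  by (rule poly_eqI) (simp add: coeff_map_poly)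

lemma map_poly_of_real_mult:
  "map_poly (of_real :: real \<Rightarrow> 'a::real_normed_field) (p * q) = map_poly of_real p * map_poly of_real q"
  by (rule poly_eqI) (simp add: coeff_map_poly coeff_mult of_real_sum)

lemma rpoly_eval_add [simp]: "rpoly_eval (p + q) x = rpoly_eval p x + rpoly_eval q x"
  by (simp add: rpoly_eval_def map_poly_of_real_add)

lemma rpoly_eval_mult [simp]: "rpoly_eval (p * q) x = rpoly_eval p x * rpoly_eval q x"
  by (simp add: rpoly_eval_def map_poly_of_real_mult)

lemma rpoly_eval_const [simp]: "rpoly_eval [:c:] x = of_real c"
  by (simp add: rpoly_eval_def map_poly_pCons)

lemma rpoly_eval_power [simp]: "rpoly_eval (p ^ n) x = rpoly_eval p x ^ n"
  by (induction n) (simp_all flip: pCons_one)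

lemma rpoly_eval_of_real: "rpoly_eval p (of_real t :: 'a::real_normed_field) = of_real (poly p t)"
  by (induction p) (simp_all add: rpoly_eval_def map_poly_pCons)

text \<open>The real quadratic \<open>(X - z) (X - cnj z)\<close>.\<close>
definition conj_quadratic :: "complex \<Rightarrow> real poly" where
  "conj_quadratic z = [:(cmod z)\<^sup>2, -2 * Re z, 1:]"

lemma rpoly_eval_conj_quadratic:
  "rpoly_eval (conj_quadratic z) x = x * x - of_real (2 * Re z) * x + of_real ((cmod z)\<^sup>2)"
  by (simp add: rpoly_eval_def conj_quadratic_def map_poly_pCons algebra_simps)

lemma poly_conj_quadratic: "poly (conj_quadratic z) t = (t - Re z)\<^sup>2 + (Im z)\<^sup>2"
  by (simp add: conj_quadratic_def cmod_power2) (simp add: power2_eq_square algebra_simps)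

lemma rpoly_eval_conj_quadratic_self [simp]: "rpoly_eval (conj_quadratic z) z = 0"
  unfolding rpoly_eval_conj_quadratic cmod_power2
  by (simp add: complex_eq_iff power2_eq_square algebra_simps)

lemma conj_quadratic_nonzero [simp]: "conj_quadratic z \<noteq> 0"
  and degree_conj_quadratic [simp]: "degree (conj_quadratic z) = 2"
  and lead_coeff_conj_quadratic [simp]: "lead_coeff (conj_quadratic z) = 1"
  by (simp_all add: conj_quadratic_def)

lemma conj_quadratic_dvd:
  assumes "Im \<alpha> \<noteq> 0" and "rpoly_eval H \<alpha> = 0"
  shows "conj_quadratic \<alpha> dvd H"
proof -
  define R where "R = H mod conj_quadratic \<alpha>"
  have "H = conj_quadratic \<alpha> * (H div conj_quadratic \<alpha>) + R"
    by (simp add: R_def)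
  then have "rpoly_eval H \<alpha> = rpoly_eval R \<alpha>"
    by (metis add_0 mult_zero_left rpoly_eval_add rpoly_eval_conj_quadratic_self rpoly_eval_mult)
  then have "rpoly_eval R \<alpha> = 0"
    using assms(2) by simp
  moreover have R: "R = [:coeff R 0, coeff R 1:]"
  proof (rule poly_eqI)
    have "degree R \<le> 1"
      using degree_mod_less[OF conj_quadratic_nonzero, of H \<alpha>] by (auto simp: R_def)
    then show "coeff R n = coeff [:coeff R 0, coeff R 1:] n" for n
      by (cases n; cases "n - 1") (auto simp: coeff_eq_0)
  qed
  moreover have "rpoly_eval R \<alpha> = of_real (coeff R 0) + \<alpha> * of_real (coeff R 1)"
    by (subst R) (simp add: rpoly_eval_def map_poly_pCons)
  ultimately have "coeff R 1 = 0 \<and> coeff R 0 = 0"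
    using assms(1) by (auto simp: complex_eq_iff)
  then have "R = 0"
    by (subst R) auto
  then show ?thesis
    by (simp add: R_def mod_eq_0_iff_dvd)
qed

lemma conj_quadratic_factor:
  assumes "degree H \<noteq> 0" and no_real_root: "\<And>t. poly H t \<noteq> 0"
  obtains \<alpha> Q where "H = conj_quadratic \<alpha> * Q"
proof -
  obtain \<alpha> where "poly (map_poly complex_of_real H) \<alpha> = 0"
    using fundamental_theorem_of_algebra_alt[of "map_poly complex_of_real H"] assms(1)
    by (metis degree_map_poly degree_pCons_0 of_real_eq_0_iff)
  then have root: "rpoly_eval H \<alpha> = 0"
    by (simp add: rpoly_eval_def)
  have "Im \<alpha> \<noteq> 0"
  proof
    assume "Im \<alpha> = 0"
    then have "\<alpha> = of_real (Re \<alpha>)"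
      by (simp add: complex_eq_iff)
    with root no_real_root show False
      by (metis of_real_eq_0_iff rpoly_eval_of_real)
  qed
  then show ?thesis
    using conj_quadratic_dvd[OF _ root] that by blast
qed

lemma norm_rpoly_eval_ge:
  fixes a :: "'a::real_normed_field"
  assumes "0 \<le> m" and min: "\<And>z. m \<le> norm (rpoly_eval (conj_quadratic z) a)"
    and no_real_root: "\<And>t. poly H t \<noteq> 0"
  shows "\<bar>lead_coeff H\<bar> * m ^ (degree H div 2) \<le> norm (rpoly_eval H a)"
  using no_real_root
proof (induction "degree H" arbitrary: H rule: less_induct)
  case less
  show ?case
  proof (cases "degree H = 0")
    case True
    then obtain c where "H = [:c:]"
      by (rule degree_eq_zeroE)
    then show ?thesis
      by simp
  next
    case False
    then obtain \<alpha> Q where HQ: "H = conj_quadratic \<alpha> * Q"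
      using conj_quadratic_factor less.prems by blast
    then have "Q \<noteq> 0"
      using less.prems by auto
    then have deg: "degree H = 2 + degree Q"
      by (simp add: HQ degree_mult_eq)
    have lead: "lead_coeff H = lead_coeff Q"
      by (simp only: HQ lead_coeff_mult lead_coeff_conj_quadratic mult_1)
    have "\<bar>lead_coeff Q\<bar> * m ^ (degree Q div 2) \<le> norm (rpoly_eval Q a)"
      using less.hyps[of Q] less.prems deg by (simp add: HQ)
    then have "m * (\<bar>lead_coeff Q\<bar> * m ^ (degree Q div 2))
        \<le> norm (rpoly_eval (conj_quadratic \<alpha>) a) * norm (rpoly_eval Q a)"
      using min assms(1) by (intro mult_mono) auto
    then show ?thesis
      using deg lead by (simp add: HQ norm_mult mult_ac)
  qed
qed

lemma conj_quadratic_odd_power_add_factor: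
  fixes k :: nat and \<epsilon> :: real and z :: complex
  assumes "0 < \<epsilon>"
  defines "n \<equiv> 2 * k + 1" and "z' \<equiv> Complex (Re z) (sqrt ((Im z)\<^sup>2 + \<epsilon>))"
  obtains Q where "conj_quadratic z ^ n + [:\<epsilon> ^ n:] = conj_quadratic z' * Q"
    "degree Q = 4 * k" "lead_coeff Q = 1" "\<And>t. poly Q t \<noteq> 0"
proof -
  define G where "G = conj_quadratic z ^ n + [:\<epsilon> ^ n:]"
  have "0 < Im z'"
    using \<open>0 < \<epsilon>\<close> by (simp add: z'_def add_nonneg_pos)
  have "rpoly_eval (conj_quadratic z) z' = - of_real \<epsilon>"
    unfolding rpoly_eval_conj_quadratic cmod_power2 z'_def using \<open>0 < \<epsilon>\<close>
    by (simp add: complex_eq_iff power2_eq_square algebra_simps)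
  then have "rpoly_eval G z' = 0"
    by (simp add: G_def n_def power_minus_odd)
  then obtain Q where GQ: "G = conj_quadratic z' * Q"
    using conj_quadratic_dvd \<open>0 < Im z'\<close> by (metis dvdE less_irrefl)
  have G_pos: "poly G t \<noteq> 0" for t
  proof -
    have "0 < poly (conj_quadratic z) t ^ n + \<epsilon> ^ n"
      using \<open>0 < \<epsilon>\<close> by (intro add_nonneg_pos) (simp_all add: poly_conj_quadratic)
    then show ?thesis
      by (simp add: G_def)
  qed
  have deg_pow: "degree (conj_quadratic z ^ n) = 2 * n"
    by (simp add: degree_power_eq)
  then have "degree G = 2 * n"
    by (simp add: G_def n_def degree_add_eq_left)
  moreover have "Q \<noteq> 0"
    using G_pos GQ by auto
  ultimately have "degree Q = 4 * k"
    by (simp add: GQ degree_mult_eq n_def)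
  moreover have "lead_coeff ([:\<epsilon> ^ n:] + conj_quadratic z ^ n) = lead_coeff (conj_quadratic z ^ n)"
    by (rule lead_coeff_add_le) (use deg_pow n_def in simp)
  then have "lead_coeff Q = 1"
    by (metis G_def GQ add.commute lead_coeff_conj_quadratic lead_coeff_mult lead_coeff_power
        mult_1 power_one)
  moreover have "poly Q t \<noteq> 0" for t
    using G_pos[of t] by (simp add: GQ)
  ultimately show ?thesis
    using that GQ unfolding G_def by blast
qed

lemma conj_quadratic_shift_bound:
  fixes a :: "'a::real_normed_field" and k :: nat
  assumes "0 < m" and min: "\<And>z. m \<le> norm (rpoly_eval (conj_quadratic z) a)"
    and z0: "norm (rpoly_eval (conj_quadratic z0) a) = m"
  defines "n \<equiv> 2 * k + 1" and "z1 \<equiv> Complex (Re z0) (sqrt ((Im z0)\<^sup>2 + m / 2))"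
  shows "norm (rpoly_eval (conj_quadratic z1) a) \<le> m + m / 2 ^ n"
proof -
  obtain Q where GQ: "conj_quadratic z0 ^ n + [:(m / 2) ^ n:] = conj_quadratic z1 * Q"
    and "degree Q = 4 * k" "lead_coeff Q = 1" "\<And>t. poly Q t \<noteq> 0"
    using conj_quadratic_odd_power_add_factor[where \<epsilon> = "m / 2" and k = k and z = z0] \<open>0 < m\<close>
    unfolding n_def z1_def by auto
  then have "m ^ (2 * k) \<le> norm (rpoly_eval Q a)"
    using norm_rpoly_eval_ge[OF less_imp_le[OF \<open>0 < m\<close>] min, of Q] by simp
  then have "norm (rpoly_eval (conj_quadratic z1) a) * m ^ (2 * k)
      \<le> norm (rpoly_eval (conj_quadratic z0 ^ n + [:(m / 2) ^ n:]) a)"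
    by (simp add: GQ norm_mult mult_left_mono)
  also have "\<dots> \<le> norm (rpoly_eval (conj_quadratic z0) a) ^ n + (m / 2) ^ n"
    using \<open>0 < m\<close> norm_triangle_ineq[of "rpoly_eval (conj_quadratic z0) a ^ n" "of_real ((m / 2) ^ n)"]
    by (simp add: norm_power)
  also have "\<dots> = (m + m / 2 ^ n) * m ^ (2 * k)"
    using z0 by (simp add: n_def power_divide field_simps)
  finally show ?thesis
    using \<open>0 < m\<close> by simp
qed

lemma conj_quadratic_shift:
  fixes a :: "'a::real_normed_field"
  assumes "0 < m" and min: "\<And>z. m \<le> norm (rpoly_eval (conj_quadratic z) a)"
    and z0: "norm (rpoly_eval (conj_quadratic z0) a) = m"
  shows "norm (rpoly_eval (conj_quadratic (Complex (Re z0) (sqrt ((Im z0)\<^sup>2 + m / 2)))) a) = m"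
    (is "norm ?q = m")
proof (rule antisym[OF _ min])
  show "norm ?q \<le> m"
  proof (rule ccontr)
    assume "\<not> norm ?q \<le> m"
    then obtain k where k: "(1 / 2) ^ k < (norm ?q - m) / m"
      using \<open>0 < m\<close> real_arch_pow_inv[of "(norm ?q - m) / m" "1 / 2"] by auto
    have "m * (1 / 2) ^ (2 * k + 1) \<le> m * (1 / 2) ^ k"
      using \<open>0 < m\<close> by (intro mult_left_mono power_decreasing) auto
    also have "\<dots> < norm ?q - m"
      using k \<open>0 < m\<close> by (simp add: pos_less_divide_eq mult.commute)
    finally have "m / 2 ^ (2 * k + 1) < norm ?q - m"
      by (simp add: power_one_over)
    moreover have "norm ?q \<le> m + m / 2 ^ (2 * k + 1)"
      by (rule conj_quadratic_shift_bound[OF assms])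
    ultimately show False
      by simp
  qed
qed

lemma norm_conj_quadratic_ge:
  fixes a :: "'a::real_normed_field"
  shows "(cmod z)\<^sup>2 - 2 * cmod z * norm a - (norm a)\<^sup>2 \<le> norm (rpoly_eval (conj_quadratic z) a)"
proof -
  define q where "q = rpoly_eval (conj_quadratic z) a"
  have "of_real ((cmod z)\<^sup>2) = q - a * a + of_real (2 * Re z) * a"
    by (simp add: q_def rpoly_eval_conj_quadratic)
  then have "(cmod z)\<^sup>2 = norm (q - a * a + of_real (2 * Re z) * a)"
    by (metis abs_power2 norm_of_real)
  also have "\<dots> \<le> norm q + norm (a * a) + norm (of_real (2 * Re z) * a)"
    using norm_triangle_ineq[of "q - a * a" "of_real (2 * Re z) * a"] norm_triangle_ineq4[of q "a * a"] by linarith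
  also have "norm (of_real (2 * Re z) * a) \<le> 2 * cmod z * norm a"
    using abs_Re_le_cmod[of z] by (simp add: norm_mult mult_right_mono)
  finally show ?thesis
    by (simp add: q_def norm_mult power2_eq_square)
qed

lemma conj_quadratic_coercive:
  fixes a :: "'a::real_normed_field"
  obtains R where "0 \<le> R" "\<And>z. R < cmod z \<Longrightarrow> B < norm (rpoly_eval (conj_quadratic z) a)"
proof
  show "0 \<le> 3 * norm a + \<bar>B\<bar> + 1"
    by simp
  fix z
  assume far: "3 * norm a + \<bar>B\<bar> + 1 < cmod z"
  define c where "c = cmod z"
  have "norm a \<le> c" "1 \<le> c" "0 \<le> c - 3 * norm a"
    using far norm_ge_zero[of a] abs_ge_zero[of B] unfolding c_def by linarith+
  have "B < c - 3 * norm a"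
    using far abs_ge_self[of B] unfolding c_def by linarith
  also have "\<dots> \<le> c * (c - 3 * norm a)"
    using mult_right_mono[OF \<open>1 \<le> c\<close> \<open>0 \<le> c - 3 * norm a\<close>] by simp
  also have "\<dots> \<le> c\<^sup>2 - 2 * c * norm a - (norm a)\<^sup>2"
    using mult_right_mono[OF \<open>norm a \<le> c\<close> norm_ge_zero[of a]]
    by (simp add: power2_eq_square algebra_simps)
  also have "\<dots> \<le> norm (rpoly_eval (conj_quadratic z) a)"
    unfolding c_def by (rule norm_conj_quadratic_ge)
  finally show "B < norm (rpoly_eval (conj_quadratic z) a)" .
qed

lemma conj_quadratic_attains_min:
  fixes a :: "'a::real_normed_field"
  obtains z0 where "\<And>z. norm (rpoly_eval (conj_quadratic z0) a) \<le> norm (rpoly_eval (conj_quadratic z) a)"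
proof -
  define \<phi> where "\<phi> z = norm (rpoly_eval (conj_quadratic z) a)" for z
  obtain R where "0 \<le> R" and far: "\<And>z. R < cmod z \<Longrightarrow> \<phi> 0 < \<phi> z"
    using conj_quadratic_coercive unfolding \<phi>_def by blast
  have "continuous_on (cball 0 R) \<phi>"
    unfolding \<phi>_def rpoly_eval_conj_quadratic by (intro continuous_intros)
  then obtain z0 where "z0 \<in> cball 0 R" and z0: "\<And>z. z \<in> cball 0 R \<Longrightarrow> \<phi> z0 \<le> \<phi> z"
    using continuous_attains_inf[of "cball 0 R" \<phi>] \<open>0 \<le> R\<close> by auto
  have "\<phi> z0 \<le> \<phi> z" for z
    using z0[of z] z0[of 0] far[of z] \<open>0 \<le> R\<close> by (cases "z \<in> cball 0 R") auto
  then show ?thesis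
    using that unfolding \<phi>_def by blast
qed

lemma conj_quadratic_far_minimiser:
  fixes a :: "'a::real_normed_field"
  assumes "0 < m" and min: "\<And>z. m \<le> norm (rpoly_eval (conj_quadratic z) a)"
    and z0: "norm (rpoly_eval (conj_quadratic z0) a) = m"
  obtains z where "norm (rpoly_eval (conj_quadratic z) a) = m" "real k * (m / 2) \<le> (cmod z)\<^sup>2"
proof -
  have "\<exists>z. norm (rpoly_eval (conj_quadratic z) a) = m \<and> real k * (m / 2) \<le> (cmod z)\<^sup>2"
  proof (induction k)
    case 0
    show ?case
      using z0 by auto
  next
    case (Suc k)
    then obtain z where z: "norm (rpoly_eval (conj_quadratic z) a) = m" "real k * (m / 2) \<le> (cmod z)\<^sup>2"
      by blast
    define z' where "z' = Complex (Re z) (sqrt ((Im z)\<^sup>2 + m / 2))"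
    have "norm (rpoly_eval (conj_quadratic z') a) = m"
      unfolding z'_def by (rule conj_quadratic_shift[OF \<open>0 < m\<close> min z(1)])
    moreover have "(cmod z')\<^sup>2 = (cmod z)\<^sup>2 + m / 2"
      using \<open>0 < m\<close> by (simp add: z'_def cmod_power2)
    ultimately show ?case
      using z(2) by (intro exI[of _ z']) (simp add: algebra_simps)
  qed
  then show ?thesis
    using that by blast
qed

text \<open>If the minimum \<open>m\<close> were positive, \<open>conj_quadratic_shift\<close> would move a minimiser
  arbitrarily far out, contradicting coercivity.\<close>
lemma conj_quadratic_root:
  fixes a :: "'a::real_normed_field"
  obtains z where "rpoly_eval (conj_quadratic z) a = 0"
proof -
  define \<phi> where "\<phi> z = norm (rpoly_eval (conj_quadratic z) a)" for z
  obtain z0 where min: "\<And>z. \<phi> z0 \<le> \<phi> z"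
    using conj_quadratic_attains_min unfolding \<phi>_def by blast
  show ?thesis
  proof (cases "\<phi> z0 = 0")
    case True
    then show ?thesis
      using that by (simp add: \<phi>_def)
  next
    case False
    then have "0 < \<phi> z0"
      by (simp add: \<phi>_def)
    obtain R where "0 \<le> R" and far: "\<And>z. R < cmod z \<Longrightarrow> \<phi> z0 < \<phi> z"
      using conj_quadratic_coercive unfolding \<phi>_def by blast
    obtain k :: nat where "R\<^sup>2 / (\<phi> z0 / 2) < real k"
      using reals_Archimedean2 by blast
    moreover obtain z where "\<phi> z = \<phi> z0" "real k * (\<phi> z0 / 2) \<le> (cmod z)\<^sup>2"
      using conj_quadratic_far_minimiser[OF \<open>0 < \<phi> z0\<close>] min unfolding \<phi>_def by blast
    ultimately have "R\<^sup>2 < (cmod z)\<^sup>2"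
      using \<open>0 < \<phi> z0\<close> by (simp add: divide_less_eq)
    then have "R < cmod z"
      using power_less_imp_less_base norm_ge_zero by blast
    then show ?thesis
      using far \<open>\<phi> z = \<phi> z0\<close> by fastforce
  qed
qed

lemma real_normed_field_square_eq:
  fixes a :: "'a::real_normed_field"
  obtains x y :: real where "(a - of_real x)\<^sup>2 = - (of_real y)\<^sup>2"
proof -
  obtain z where "rpoly_eval (conj_quadratic z) a = 0"
    by (rule conj_quadratic_root)
  then have "(a - of_real (Re z))\<^sup>2 + (of_real (Im z))\<^sup>2 = 0"
    unfolding rpoly_eval_conj_quadratic cmod_power2
    by (simp add: power2_eq_square algebra_simps)
  then show ?thesis
    using that by (simp add: eq_neg_iff_add_eq_0)
qed

lemma real_normed_field_of_real:
  fixes a :: "'a::real_normed_field"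
  assumes "\<nexists>j::'a. j * j = -1"
  obtains r where "a = of_real r"
proof -
  obtain x y where sq: "(a - of_real x)\<^sup>2 = - (of_real y)\<^sup>2"
    by (rule real_normed_field_square_eq)
  show thesis
  proof (cases "y = 0")
    case True
    then show ?thesis
      using sq that by simp
  next
    case False
    then have "((a - of_real x) / of_real y) * ((a - of_real x) / of_real y) = -1"
      using sq by (simp add: field_simps power2_eq_square)
    with assms show ?thesis
      by blast
  qed
qed

lemma real_normed_field_decompose:
  fixes a j :: "'a::real_normed_field"
  assumes j: "j * j = -1"
  obtains r s where "a = of_real r + of_real s * j"
proof -
  obtain x y where "(a - of_real x)\<^sup>2 = - (of_real y)\<^sup>2"
    by (rule real_normed_field_square_eq)
  also have "\<dots> = (of_real y * j)\<^sup>2"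
    using j by (simp add: power_mult_distrib power2_eq_square[of j])
  finally have "a - of_real x = of_real y * j \<or> a - of_real x = - (of_real y * j)"
    by (simp add: power2_eq_iff)
  then show ?thesis
    using that[of x y] that[of x "- y"] by (auto simp: algebra_simps)
qed

text \<open>Multiplying by the conjugate \<open>r - s j\<close> gives \<open>r\<^sup>2 + s\<^sup>2 \<le> \<parallel>r + s j\<parallel> (\<bar>r\<bar> + \<bar>s\<bar>)\<close>.\<close>
lemma abs_le_norm_of_real_add_mult:
  fixes j :: "'a::real_normed_field"
  assumes j: "j * j = -1"
  shows "\<bar>r\<bar> \<le> 2 * norm (of_real r + of_real s * j)"
proof -
  define w where "w = of_real r + of_real s * j"
  have "(norm j)\<^sup>2 = 1"
    using j by (simp add: power2_eq_square flip: norm_mult)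
  then have "norm j = 1"
    using norm_ge_zero[of j] by (auto simp: power2_eq_1_iff)
  have "w * (of_real r - of_real s * j) = of_real r * of_real r - of_real s * of_real s * (j * j)"
    by (simp add: w_def algebra_simps)
  also have "\<dots> = of_real (r\<^sup>2 + s\<^sup>2)"
    using j by (simp add: power2_eq_square)
  finally have "w * (of_real r - of_real s * j) = of_real (r\<^sup>2 + s\<^sup>2)" .
  then have "norm w * norm (of_real r - of_real s * j) = \<bar>r\<^sup>2 + s\<^sup>2\<bar>"
    by (simp only: norm_of_real flip: norm_mult)
  then have "r\<^sup>2 + s\<^sup>2 = norm w * norm (of_real r - of_real s * j)"
    by (simp add: abs_of_nonneg sum_power2_ge_zero)
  also have "\<dots> \<le> norm w * (\<bar>r\<bar> + \<bar>s\<bar>)"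
    using norm_triangle_ineq4[of "of_real r :: 'a" "of_real s * j"] \<open>norm j = 1\<close>
    by (intro mult_left_mono) (simp_all add: norm_mult)
  finally have "(\<bar>r\<bar> + \<bar>s\<bar>) * (\<bar>r\<bar> + \<bar>s\<bar>) \<le> (2 * norm w) * (\<bar>r\<bar> + \<bar>s\<bar>)"
    using sum_squares_bound[of "\<bar>r\<bar>" "\<bar>s\<bar>"] by (simp add: power2_eq_square algebra_simps)
  then have "\<bar>r\<bar> + \<bar>s\<bar> \<le> 2 * norm w"
    using abs_ge_zero[of r] abs_ge_zero[of s]
    by (cases "\<bar>r\<bar> + \<bar>s\<bar> = 0") (auto simp: mult_le_cancel_right)
  then show ?thesis
    by (simp add: w_def)
qed

section \<open>Complexification\<close>

definition imag_unit :: "'a::real_normed_field" where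
  "imag_unit = (SOME j. j * j = -1)"

lemma imag_unit_square: "\<exists>j::'a::real_normed_field. j * j = -1 \<Longrightarrow> (imag_unit :: 'a) * imag_unit = -1"
  unfolding imag_unit_def by (rule someI_ex)

text \<open>The \<open>K\<close>-linear functional with real part \<open>u\<close>: for \<open>K = \<complex>\<close> it is \<open>z \<mapsto> u z - i u (i z)\<close>.
  If \<open>K = \<real>\<close>, \<open>imag_unit\<close> is an arbitrary value and is not used.\<close>
definition complexify :: "('a::real_normed_field \<Rightarrow> 'v \<Rightarrow> 'v) \<Rightarrow> ('v \<Rightarrow> real) \<Rightarrow> 'v \<Rightarrow> 'a" where
  "complexify sc u z =
     (if \<exists>j::'a. j * j = -1 then of_real (u z) - of_real (u (sc imag_unit z)) * imag_unit
      else of_real (u z))"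

lemma real_imag_form_scale:
  fixes sc :: "'a::real_normed_field \<Rightarrow> 'v::ab_group_add \<Rightarrow> 'v" and i :: 'a
  assumes "vector_space sc" and "Vector_Spaces.linear (\<lambda>t. sc (of_real t)) (*) u" and i: "i * i = -1"
  shows "c * (of_real (u x) - of_real (u (sc i x)) * i)
    = of_real (u (sc c x)) - of_real (u (sc i (sc c x))) * i"
proof -
  interpret vector_space sc by fact
  interpret u: Vector_Spaces.linear "\<lambda>t. sc (of_real t)" "(*)" u by fact
  obtain a b where c: "c = of_real a + of_real b * i"
    using real_normed_field_decompose[OF i] by blast
  have "i * c = of_real a * i + of_real b * (i * i)"
    by (simp add: c algebra_simps)
  then have "sc i (sc c x) = sc (of_real a * i - of_real b) x"
    using i by simp
  then have "sc i (sc c x) = sc (of_real a) (sc i x) - sc (of_real b) x"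
    by (simp add: scale_left_diff_distrib flip: scale_scale)
  then have ic: "u (sc i (sc c x)) = a * u (sc i x) - b * u x"
    by (simp only: u.diff u.scale)
  have cx: "u (sc c x) = a * u x + b * u (sc i x)"
    by (simp add: c scale_left_distrib u.add u.scale flip: scale_scale)
  have "c * (of_real (u x) - of_real (u (sc i x)) * i)
      = of_real (a * u x) + of_real (b * u x - a * u (sc i x)) * i - of_real (b * u (sc i x)) * (i * i)"
    by (simp add: c algebra_simps)
  then show ?thesis
    unfolding ic cx using i by (simp add: algebra_simps)
qed

lemma complexify_linear:
  fixes sc :: "'a::real_normed_field \<Rightarrow> 'v::ab_group_add \<Rightarrow> 'v"
  assumes "vector_space sc" and u: "Vector_Spaces.linear (\<lambda>t. sc (of_real t)) (*) u"
  shows "Vector_Spaces.linear sc (*) (complexify sc u)"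
proof -
  interpret vector_space sc by fact
  interpret u: Vector_Spaces.linear "\<lambda>t. sc (of_real t)" "(*)" u by fact
  have "complexify sc u (sc c x) = c * complexify sc u x" for c x
  proof (cases "\<exists>j::'a. j * j = -1")
    case True
    then show ?thesis
      using real_imag_form_scale[OF assms imag_unit_square[OF True]] by (simp add: complexify_def)
  next
    case False
    then obtain a where "c = of_real a"
      by (rule real_normed_field_of_real)
    then show ?thesis
      using False by (simp add: complexify_def u.scale)
  qed
  moreover have "complexify sc u (x + y) = complexify sc u x + complexify sc u y" for x y
    by (simp add: complexify_def u.add algebra_simps scale_right_distrib)
  ultimately show ?thesis
    using \<open>vector_space sc\<close> vector_space_over_itself.vector_space_axioms
    by (simp add: Vector_Spaces.linear_iff)
qed

lemma abs_le_norm_complexify: "\<bar>u z\<bar> \<le> 2 * norm (complexify sc u z :: 'a::real_normed_field)"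
proof (cases "\<exists>j::'a. j * j = -1")
  case True
  then have "complexify sc u z = of_real (u z) + of_real (- u (sc imag_unit z)) * (imag_unit :: 'a)"
    by (simp add: complexify_def)
  then show ?thesis
    using abs_le_norm_of_real_add_mult[OF imag_unit_square[OF True]] by metis
qed (simp add: complexify_def)

lemma continuous_map_complexify:
  fixes sc :: "'a::real_normed_field \<Rightarrow> 'v \<Rightarrow> 'v"
  assumes u: "continuous_map T euclidean u" and sc: "continuous_map T T (sc imag_unit)"
  shows "continuous_map T euclidean (complexify sc u)"
proof -
  have "continuous_map T euclidean (\<lambda>z. u (sc imag_unit z))"
    using continuous_map_compose[OF sc u] by (simp add: o_def)
  then show ?thesis
    using u unfolding complexify_def continuous_map_atin
    by (auto intro!: tendsto_intros)
qed

section \<open>Hahn-Banach\<close>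

locale sublinear_functional = vector_space scale
  for scale :: "real \<Rightarrow> 'v::ab_group_add \<Rightarrow> 'v" (infixr \<open>\<cdot>\<close> 75) +
  fixes p :: "'v \<Rightarrow> real"
  assumes subadditive: "p (x + y) \<le> p x + p y"
    and pos_homogeneous: "0 \<le> t \<Longrightarrow> p (t \<cdot> x) = t * p x"
begin

lemma p_zero [simp]: "p 0 = 0"
  using pos_homogeneous[of 0 0] by simp

lemma mult_le_p_scale: "t * p x \<le> p (t \<cdot> x)"
proof (cases "0 \<le> t")
  case False
  have "p 0 \<le> p (t \<cdot> x) + p ((- t) \<cdot> x)"
    using subadditive[of "t \<cdot> x" "(- t) \<cdot> x"]
    by (simp only: scale_left_distrib[symmetric] add.right_inverse scale_zero_left)
  moreover have "p ((- t) \<cdot> x) = - t * p x"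
    using False by (intro pos_homogeneous) simp
  ultimately show ?thesis
    by simp
qed (simp add: pos_homogeneous)

definition dominated_graph :: "('v \<times> real) set \<Rightarrow> 'v \<Rightarrow> bool" where
  "dominated_graph Gr y0 \<longleftrightarrow>
    (\<forall>x a y b. (x, a) \<in> Gr \<longrightarrow> (y, b) \<in> Gr \<longrightarrow> (x + y, a + b) \<in> Gr) \<and>
    (\<forall>x a t. (x, a) \<in> Gr \<longrightarrow> (t \<cdot> x, t * a) \<in> Gr) \<and>
    (\<forall>x a b. (x, a) \<in> Gr \<longrightarrow> (x, b) \<in> Gr \<longrightarrow> a = b) \<and>
    (\<forall>x a. (x, a) \<in> Gr \<longrightarrow> a \<le> p x) \<and> (y0, p y0) \<in> Gr"

lemma dominated_graphD:
  assumes "dominated_graph Gr y0"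
  shows dominated_graph_add: "(x, a) \<in> Gr \<Longrightarrow> (y, b) \<in> Gr \<Longrightarrow> (x + y, a + b) \<in> Gr"
    and dominated_graph_scale: "(x, a) \<in> Gr \<Longrightarrow> (t \<cdot> x, t * a) \<in> Gr"
    and dominated_graph_unique: "(x, a) \<in> Gr \<Longrightarrow> (x, b) \<in> Gr \<Longrightarrow> a = b"
    and dominated_graph_le: "(x, a) \<in> Gr \<Longrightarrow> a \<le> p x"
    and dominated_graph_base: "(y0, p y0) \<in> Gr"
  using assms unfolding dominated_graph_def by blast+

lemma dominated_graph_diff:
  "dominated_graph Gr y0 \<Longrightarrow> (x, a) \<in> Gr \<Longrightarrow> (y, b) \<in> Gr \<Longrightarrow> (x - y, a - b) \<in> Gr"
  using dominated_graph_add[of Gr y0 x a "- y" "- b"] dominated_graph_scale[of Gr y0 y b "- 1"]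
  by (simp add: scale_minus_left)

lemma dominated_graph_zero:
  assumes "dominated_graph Gr y0"
  shows "(0, 0) \<in> Gr"
  using dominated_graph_scale[OF assms dominated_graph_base[OF assms], of 0] by simp

lemma dominated_graph_line: "dominated_graph (range (\<lambda>t. (t \<cdot> y0, t * p y0))) y0"
proof -
  have "t * p y0 = t' * p y0" if "t \<cdot> y0 = t' \<cdot> y0" for t t'
    using that by (cases "y0 = 0") (auto simp: scale_cancel_right)
  then show ?thesis
    unfolding dominated_graph_def
    by (auto simp: mult_le_p_scale scale_left_distrib distrib_right intro: range_eqI[of _ _ 1]
        range_eqI[of _ _ "_ + _"] range_eqI[of _ _ "_ * _"])
qed

lemma dominated_graph_chain_Union:
  assumes C: "C \<in> chains {Gr. dominated_graph Gr y0}" and "C \<noteq> {}"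
  shows "dominated_graph (\<Union>C) y0"
proof -
  have dom: "dominated_graph X y0" if "X \<in> C" for X
    using C that by (auto simp: chains_def)
  have common: "\<exists>Z\<in>C. (x, a) \<in> Z \<and> (y, b) \<in> Z" if "(x, a) \<in> \<Union>C" "(y, b) \<in> \<Union>C" for x a y b
    using C that unfolding chains_def chain_subset_def by blast
  show ?thesis
    unfolding dominated_graph_def
  proof (intro conjI allI impI)
    fix x a y b
    assume "(x, a) \<in> \<Union>C" "(y, b) \<in> \<Union>C"
    then show "(x + y, a + b) \<in> \<Union>C"
      using common dominated_graph_add[OF dom] by blast
  next
    fix x a b
    assume "(x, a) \<in> \<Union>C" "(x, b) \<in> \<Union>C"
    then show "a = b"
      using common dominated_graph_unique[OF dom] by blast
  next
    show "(y0, p y0) \<in> \<Union>C"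
      using \<open>C \<noteq> {}\<close> dominated_graph_base[OF dom] by blast
  qed (use dominated_graph_scale[OF dom] dominated_graph_le[OF dom] in blast)+
qed

lemma dominated_extension_le:
  assumes M: "dominated_graph M y0" and "(x, a) \<in> M"
    and lower: "\<And>x a. (x, a) \<in> M \<Longrightarrow> a - p (x - z) \<le> c"
    and upper: "\<And>y b. (y, b) \<in> M \<Longrightarrow> c \<le> p (y + z) - b"
  shows "a + t * c \<le> p (x + t \<cdot> z)"
proof -
  consider "t = 0" | "0 < t" | "t < 0"
    by linarith
  then show ?thesis
  proof cases
    case 1
    then show ?thesis
      using dominated_graph_le[OF M \<open>(x, a) \<in> M\<close>] by simp
  next
    case 2
    have "c \<le> p ((1 / t) \<cdot> x + z) - (1 / t) * a"
      by (rule upper[OF dominated_graph_scale[OF M \<open>(x, a) \<in> M\<close>]])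
    then have "t * c \<le> t * p ((1 / t) \<cdot> x + z) - a"
      using 2 by (simp add: field_simps)
    also have "t * p ((1 / t) \<cdot> x + z) = p (x + t \<cdot> z)"
      using 2 by (simp add: pos_homogeneous[symmetric] scale_right_distrib)
    finally show ?thesis
      by simp
  next
    case 3
    have "(- 1 / t) * a - p ((- 1 / t) \<cdot> x - z) \<le> c"
      by (rule lower[OF dominated_graph_scale[OF M \<open>(x, a) \<in> M\<close>]])
    then have "a - (- t) * p ((- 1 / t) \<cdot> x - z) \<le> - t * c"
      using 3 by (simp add: field_simps)
    also have "(- t) * p ((- 1 / t) \<cdot> x - z) = p ((- t) \<cdot> ((- 1 / t) \<cdot> x - z))"
      using 3 by (intro pos_homogeneous[symmetric]) simp
    also have "(- t) \<cdot> ((- 1 / t) \<cdot> x - z) = x + t \<cdot> z"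
      using 3 by (simp add: scale_right_diff_distrib)
    finally show ?thesis
      by simp
  qed
qed

lemma extension_constant_exists:
  assumes M: "dominated_graph M y0"
  obtains c where "\<And>x a. (x, a) \<in> M \<Longrightarrow> a - p (x - z) \<le> c"
    and "\<And>y b. (y, b) \<in> M \<Longrightarrow> c \<le> p (y + z) - b"
proof -
  define S where "S = {a - p (x - z) | x a. (x, a) \<in> M}"
  have S_le: "s \<le> p (y + z) - b" if "s \<in> S" "(y, b) \<in> M" for s y b
  proof -
    obtain x a where xa: "s = a - p (x - z)" "(x, a) \<in> M"
      using \<open>s \<in> S\<close> by (auto simp: S_def)
    have "a + b \<le> p ((x - z) + (y + z))"
      using dominated_graph_le[OF M dominated_graph_add[OF M xa(2) \<open>(y, b) \<in> M\<close>]] by simp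
    then show ?thesis
      using subadditive[of "x - z" "y + z"] xa(1) by simp
  qed
  have "S \<noteq> {}"
    using dominated_graph_base[OF M] by (auto simp: S_def)
  have "bdd_above S"
    unfolding bdd_above_def using S_le[OF _ dominated_graph_base[OF M]] by blast
  show ?thesis
  proof (rule that[of "Sup S"])
    show "a - p (x - z) \<le> Sup S" if "(x, a) \<in> M" for x a
      using \<open>bdd_above S\<close> that by (intro cSup_upper) (auto simp: S_def)
    show "Sup S \<le> p (y + z) - b" if "(y, b) \<in> M" for y b
      using S_le \<open>S \<noteq> {}\<close> that by (intro cSup_least) auto
  qed
qed

definition extend_graph :: "('v \<times> real) set \<Rightarrow> 'v \<Rightarrow> real \<Rightarrow> ('v \<times> real) set" where
  "extend_graph M z c = {(x + t \<cdot> z, a + t * c) | x a t. (x, a) \<in> M}"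

lemma extend_graph_unique:
  assumes M: "dominated_graph M y0" and z: "\<And>a. (z, a) \<notin> M"
    and "(x, a) \<in> M" "(x', a') \<in> M" and eq: "x + t \<cdot> z = x' + t' \<cdot> z"
  shows "a + t * c = a' + t' * c"
proof (cases "t = t'")
  case True
  then show ?thesis
    using eq dominated_graph_unique[OF M] assms(3,4) by auto
next
  case False
  have "(t - t') \<cdot> z = x' - x"
    using eq by (simp add: scale_left_diff_distrib algebra_simps)
  moreover have "1 / (t - t') * (t - t') = 1"
    using False by simp
  ultimately have "z = (1 / (t - t')) \<cdot> (x' - x)"
    by (metis scale_one scale_scale)
  then have "(z, (1 / (t - t')) * (a' - a)) \<in> M"
    using dominated_graph_scale[OF M dominated_graph_diff[OF M assms(4,3)]] by metis
  with z show ?thesis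
    by blast
qed

lemma dominated_graph_extend_graph:
  assumes M: "dominated_graph M y0" and z: "\<And>a. (z, a) \<notin> M"
    and lower: "\<And>x a. (x, a) \<in> M \<Longrightarrow> a - p (x - z) \<le> c"
    and upper: "\<And>y b. (y, b) \<in> M \<Longrightarrow> c \<le> p (y + z) - b"
  shows "dominated_graph (extend_graph M z c) y0"
  unfolding dominated_graph_def
proof (intro conjI allI impI)
  fix x a y b
  assume "(x, a) \<in> extend_graph M z c" "(y, b) \<in> extend_graph M z c"
  then obtain x1 a1 t1 x2 a2 t2 where "(x1, a1) \<in> M" "(x2, a2) \<in> M"
    and "x = x1 + t1 \<cdot> z" "a = a1 + t1 * c" "y = x2 + t2 \<cdot> z" "b = a2 + t2 * c"
    unfolding extend_graph_def by blast
  moreover have "(x1 + x2, a1 + a2) \<in> M"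
    using dominated_graph_add[OF M] calculation(1,2) .
  moreover have "(x + y, a + b) = ((x1 + x2) + (t1 + t2) \<cdot> z, (a1 + a2) + (t1 + t2) * c)"
    using calculation by (simp add: scale_left_distrib algebra_simps)
  ultimately show "(x + y, a + b) \<in> extend_graph M z c"
    unfolding extend_graph_def by blast
next
  fix x a t
  assume "(x, a) \<in> extend_graph M z c"
  then obtain x1 a1 t1 where "(x1, a1) \<in> M" "x = x1 + t1 \<cdot> z" "a = a1 + t1 * c"
    unfolding extend_graph_def by blast
  moreover have "(t \<cdot> x1, t * a1) \<in> M"
    using dominated_graph_scale[OF M] calculation(1) .
  moreover have "(t \<cdot> x, t * a) = (t \<cdot> x1 + (t * t1) \<cdot> z, t * a1 + (t * t1) * c)"
    using calculation by (simp add: scale_right_distrib algebra_simps)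
  ultimately show "(t \<cdot> x, t * a) \<in> extend_graph M z c"
    unfolding extend_graph_def by blast
next
  fix x a b
  assume "(x, a) \<in> extend_graph M z c" "(x, b) \<in> extend_graph M z c"
  then show "a = b"
    unfolding extend_graph_def using extend_graph_unique[OF M z] by blast
next
  fix x a
  assume "(x, a) \<in> extend_graph M z c"
  then show "a \<le> p x"
    unfolding extend_graph_def using dominated_extension_le[OF M _ lower upper] by blast
next
  show "(y0, p y0) \<in> extend_graph M z c"
    unfolding extend_graph_def using dominated_graph_base[OF M] by force
qed

lemma dominated_graph_extend:
  assumes M: "dominated_graph M y0" and z: "\<And>a. (z, a) \<notin> M"
  obtains M' where "dominated_graph M' y0" "M \<subset> M'"
proof -
  obtain c where lower: "\<And>x a. (x, a) \<in> M \<Longrightarrow> a - p (x - z) \<le> c"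
    and upper: "\<And>y b. (y, b) \<in> M \<Longrightarrow> c \<le> p (y + z) - b"
    using extension_constant_exists[OF M] by blast
  have "M \<subseteq> extend_graph M z c"
    unfolding extend_graph_def by force
  moreover have "(z, c) \<in> extend_graph M z c"
    unfolding extend_graph_def using dominated_graph_zero[OF M] by force
  ultimately show ?thesis
    using that dominated_graph_extend_graph[OF M z lower upper] z by blast
qed

theorem Hahn_Banach:
  obtains u where "Vector_Spaces.linear scale (*) u" "\<And>x. u x \<le> p x" "u y0 = p y0"
proof -
  have "\<forall>C\<in>chains {Gr. dominated_graph Gr y0}. \<exists>U\<in>{Gr. dominated_graph Gr y0}. \<forall>X\<in>C. X \<subseteq> U"
    using dominated_graph_line dominated_graph_chain_Union
    by (metis (mono_tags, lifting) Sup_upper empty_iff mem_Collect_eq)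
  then obtain M where M: "dominated_graph M y0"
    and maximal: "\<And>X. dominated_graph X y0 \<Longrightarrow> M \<subseteq> X \<Longrightarrow> X = M"
    using Zorn_Lemma2[of "{Gr. dominated_graph Gr y0}"] by auto
  have "\<exists>a. (x, a) \<in> M" for x
    using dominated_graph_extend[OF M] maximal by blast
  then have "\<exists>!a. (x, a) \<in> M" for x
    using dominated_graph_unique[OF M] by blast
  then obtain u where u: "\<And>x. (x, u x) \<in> M"
    by metis
  have u_eq: "u x = a" if "(x, a) \<in> M" for x a
    using dominated_graph_unique[OF M u that] .
  show ?thesis
  proof
    show "Vector_Spaces.linear scale (*) u"
      unfolding Vector_Spaces.linear_iff
      using vector_space_axioms vector_space_over_itself.vector_space_axioms
        u_eq[OF dominated_graph_add[OF M u u]] u_eq[OF dominated_graph_scale[OF M u]] by blast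
    show "u x \<le> p x" for x
      using dominated_graph_le[OF M u] .
    show "u y0 = p y0"
      using u_eq[OF dominated_graph_base[OF M]] .
  qed
qed

end

section \<open>Gliding hump\<close>

lemma gliding_hump_estimate:
  fixes f b :: "nat \<Rightarrow> real"
  assumes bound: "\<And>i. \<bar>f i\<bar> \<le> Q" and head: "\<And>i. i < n \<Longrightarrow> \<bar>f i\<bar> \<le> b i" and peak: "f n = Q"
    and large: "3 * 4 ^ n * (real n + 1 + (\<Sum>i<n. b i * (1 / 4) ^ i)) \<le> Q"
  shows "real n + 1 \<le> (\<Sum>i. f i * (1 / 4) ^ i)"
proof -
  define H where "H = (\<Sum>i<n. b i * (1 / 4) ^ i)"
  define X where "X = Q * (1 / 4) ^ n"
  have geom: "summable (\<lambda>i. c * (1 / 4 :: real) ^ i)" "(\<Sum>i. c * (1 / 4 :: real) ^ i) = c * 4 / 3" for c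
    by (simp_all add: suminf_mult suminf_geometric)
  have summable: "summable (\<lambda>i. f i * (1 / 4) ^ i)"
    using bound by (intro summable_comparison_test'[OF geom(1)[of Q]]) (simp add: abs_mult)
  have "0 \<le> b i" if "i < n" for i
    using head[OF that] abs_ge_zero[of "f i"] by linarith
  then have "H \<ge> 0"
    unfolding H_def by (intro sum_nonneg) simp
  have "- H \<le> (\<Sum>i<n. f i * (1 / 4) ^ i)"
    unfolding H_def sum_negf[symmetric]
  proof (intro sum_mono)
    fix i
    assume "i \<in> {..<n}"
    then have "- b i \<le> f i"
      using head[of i] by auto
    then show "- (b i * (1 / 4) ^ i) \<le> f i * (1 / 4) ^ i"
      using mult_right_mono[of "- b i" "f i" "(1 / 4) ^ i"] by simp
  qed
  moreover have "norm (\<Sum>m. f (m + Suc n) * (1 / 4) ^ (m + Suc n))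
      \<le> (\<Sum>m. Q * (1 / 4) ^ Suc n * (1 / 4) ^ m)"
    using bound geom(1)
    by (intro norm_suminf_le) (simp_all add: abs_mult power_add mult_right_mono)
  ultimately have "X - X / 3 - H \<le> (\<Sum>i. f i * (1 / 4) ^ i)"
    using suminf_split_initial_segment[OF summable, of "Suc n"] geom(2)[of "Q * (1 / 4) ^ Suc n"] peak
    by (simp add: X_def mult_ac)
  moreover have "3 * (real n + 1 + H) \<le> X"
    using mult_right_mono[OF large, of "(1 / 4) ^ n"] by (simp add: X_def H_def power_one_over)
  ultimately show ?thesis
    using \<open>H \<ge> 0\<close> by simp
qed

lemma weighted_functional_series:
  fixes scale :: "real \<Rightarrow> 'v::ab_group_add \<Rightarrow> 'v" and u :: "nat \<Rightarrow> 'v \<Rightarrow> real"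
  assumes lin: "\<And>i. Vector_Spaces.linear scale (*) (u i)" and bound: "\<And>i z. \<bar>u i z\<bar> \<le> q z"
  shows "Vector_Spaces.linear scale (*) (\<lambda>z. \<Sum>i. u i z * (1 / 4) ^ i)"
    and "\<bar>\<Sum>i. u i z * (1 / 4) ^ i\<bar> \<le> 4 / 3 * q z"
proof -
  have summable: "summable (\<lambda>i. u i z * (1 / 4) ^ i)" for z
  proof (rule summable_comparison_test')
    show "summable (\<lambda>i. q z * (1 / 4) ^ i)"
      by (intro summable_mult summable_geometric) simp
    show "norm (u i z * (1 / 4) ^ i) \<le> q z * (1 / 4) ^ i" for i
      using bound by (simp add: abs_mult mult_right_mono)
  qed
  have "(\<Sum>i. u i (a + b) * (1 / 4) ^ i) = (\<Sum>i. u i a * (1 / 4) ^ i) + (\<Sum>i. u i b * (1 / 4) ^ i)"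
    and "(\<Sum>i. u i (scale t a) * (1 / 4) ^ i) = t * (\<Sum>i. u i a * (1 / 4) ^ i)" for a b t
    using lin suminf_add[OF summable summable] suminf_mult[OF summable]
    by (simp_all add: Vector_Spaces.linear_iff algebra_simps)
  then show "Vector_Spaces.linear scale (*) (\<lambda>z. \<Sum>i. u i z * (1 / 4) ^ i)"
    using lin[of 0] by (simp add: Vector_Spaces.linear_iff)
  have "norm (\<Sum>i. u i z * (1 / 4) ^ i) \<le> (\<Sum>i. q z * (1 / 4) ^ i)"
    using bound by (intro norm_suminf_le) (simp_all add: abs_mult mult_right_mono)
  then show "\<bar>\<Sum>i. u i z * (1 / 4) ^ i\<bar> \<le> 4 / 3 * q z"
    by (simp add: suminf_mult suminf_geometric)
qed

lemma gliding_hump_sequence: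
  fixes q :: "'v \<Rightarrow> real" and U :: "'v \<Rightarrow> 'v \<Rightarrow> real"
  assumes unbounded: "\<And>R. \<exists>z\<in>M. R \<le> q z" and bounded: "\<And>y. \<exists>B. \<forall>z\<in>M. \<bar>U y z\<bar> \<le> B"
  obtains y b where "\<And>n. y n \<in> M" "\<And>i z. z \<in> M \<Longrightarrow> \<bar>U (y i) z\<bar> \<le> b i"
    "\<And>n. 3 * 4 ^ n * (real n + 1 + (\<Sum>i<n. b i * (1 / 4) ^ i)) \<le> q (y n)"
proof -
  define Y where "Y h n = (SOME z. z \<in> M \<and> 3 * 4 ^ n * (real n + 1 + h) \<le> q z)" for h n
  have Y: "Y h n \<in> M \<and> 3 * 4 ^ n * (real n + 1 + h) \<le> q (Y h n)" for h n
  proof -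
    have "\<exists>z. z \<in> M \<and> 3 * 4 ^ n * (real n + 1 + h) \<le> q z"
      using unbounded by blast
    then show ?thesis
      unfolding Y_def by (rule someI_ex)
  qed
  define bd where "bd y = (SOME B. \<forall>z\<in>M. \<bar>U y z\<bar> \<le> B)" for y
  have bd: "\<forall>z\<in>M. \<bar>U y z\<bar> \<le> bd y" for y
    unfolding bd_def by (rule someI_ex[OF bounded])
  define H where "H = rec_nat 0 (\<lambda>n h. h + bd (Y h n) * (1 / 4) ^ n)"
  define y where "y n = Y (H n) n" for n
  have H: "H n = (\<Sum>i<n. bd (y i) * (1 / 4) ^ i)" for n
    by (induction n) (simp_all add: H_def y_def)
  show ?thesis
  proof (rule that[of y "\<lambda>i. bd (y i)"])
    show "y n \<in> M" for n
      using Y by (simp add: y_def)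
    show "\<bar>U (y i) z\<bar> \<le> bd (y i)" if "z \<in> M" for i z
      using bd that by blast
    have "3 * 4 ^ n * (real n + 1 + H n) \<le> q (y n)" for n
      using Y by (simp add: y_def)
    then show "3 * 4 ^ n * (real n + 1 + (\<Sum>i<n. bd (y i) * (1 / 4) ^ i)) \<le> q (y n)" for n
      by (simp only: H)
  qed
qed

text \<open>If \<open>q\<close> were unbounded on \<open>M\<close>, the series \<open>\<Sum>i. u\<^sub>i / 4\<^sup>i\<close> of functionals norming \<open>q\<close> at
  points \<open>y\<^sub>i \<in> M\<close> with rapidly growing \<open>q y\<^sub>i\<close> would be \<open>q\<close>-bounded but unbounded on \<open>M\<close>.\<close>
lemma seminorm_bounded_if_functionals_bounded:
  fixes scale :: "real \<Rightarrow> 'v::ab_group_add \<Rightarrow> 'v" and q :: "'v \<Rightarrow> real"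
  assumes norming: "\<And>y. \<exists>u. Vector_Spaces.linear scale (*) u \<and> (\<forall>z. \<bar>u z\<bar> \<le> q z) \<and> u y = q y"
    and bounded: "\<And>u C. Vector_Spaces.linear scale (*) u \<Longrightarrow> (\<And>z. \<bar>u z\<bar> \<le> C * q z) \<Longrightarrow>
      \<exists>B. \<forall>y\<in>M. \<bar>u y\<bar> \<le> B"
  shows "\<exists>R. \<forall>y\<in>M. q y \<le> R"
proof (rule ccontr)
  assume "\<not> (\<exists>R. \<forall>y\<in>M. q y \<le> R)"
  then have unbounded: "\<exists>z\<in>M. R \<le> q z" for R
    by (meson not_le less_imp_le)
  define U where "U y = (SOME u. Vector_Spaces.linear scale (*) u \<and> (\<forall>z. \<bar>u z\<bar> \<le> q z) \<and> u y = q y)"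
    for y
  have U: "Vector_Spaces.linear scale (*) (U y)" "\<bar>U y z\<bar> \<le> q z" "U y y = q y" for y z
    using someI_ex[OF norming] unfolding U_def by blast+
  have "\<exists>B. \<forall>z\<in>M. \<bar>U y z\<bar> \<le> B" for y
    using bounded[of "U y" 1] U by simp
  then obtain y b where y: "\<And>n. y n \<in> M" "\<And>i z. z \<in> M \<Longrightarrow> \<bar>U (y i) z\<bar> \<le> b i"
    "\<And>n. 3 * 4 ^ n * (real n + 1 + (\<Sum>i<n. b i * (1 / 4) ^ i)) \<le> q (y n)"
    using gliding_hump_sequence[OF unbounded] by blast
  define V where "V z = (\<Sum>i. U (y i) z * (1 / 4) ^ i)" for z
  have "Vector_Spaces.linear scale (*) V" "\<bar>V z\<bar> \<le> 4 / 3 * q z" for z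
    unfolding V_def using weighted_functional_series[of scale "\<lambda>i. U (y i)" q, OF U(1) U(2)] by simp_all
  then obtain B where B: "\<And>z. z \<in> M \<Longrightarrow> \<bar>V z\<bar> \<le> B"
    using bounded by blast
  obtain n :: nat where "B < real n"
    using reals_Archimedean2 by blast
  moreover have "real n + 1 \<le> V (y n)"
    unfolding V_def
  proof (rule gliding_hump_estimate)
    show "\<bar>U (y i) (y n)\<bar> \<le> q (y n)" "\<bar>U (y i) (y n)\<bar> \<le> b i" for i
      by (rule U(2), rule y(2)[OF y(1)])
  qed (use U(3) y(3) in simp_all)
  ultimately show False
    using B[OF y(1)[of n]] by simp
qed

section \<open>Locally convex spaces\<close>

lemma lc_vector_topology_continuous_scale:
  assumes "lc_vector_topology S add sc T"
  shows "continuous_map T T (sc c)"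
proof -
  have pair: "continuous_map T (prod_topology euclidean T) (\<lambda>z. (c, z))"
    by (intro continuous_map_pairedI) auto
  have "continuous_map (prod_topology euclidean T) T (\<lambda>(c, x). sc c x)"
    using assms by (simp add: lc_vector_topology_def)
  from continuous_map_compose[OF pair this] show ?thesis
    by (simp add: o_def)
qed

lemma lc_vector_topology_continuous_translate:
  assumes "lc_vector_topology S add sc T" and "w \<in> S"
  shows "continuous_map T T (\<lambda>z. add z w)"
proof -
  have "topspace T = S"
    using assms(1) by (simp add: lc_vector_topology_def)
  then have pair: "continuous_map T (prod_topology T T) (\<lambda>z. (z, w))"
    using assms(2) by (intro continuous_map_pairedI) auto
  have "continuous_map (prod_topology T T) T (\<lambda>(x, y). add x y)"
    using assms by (simp add: lc_vector_topology_def)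
  from continuous_map_compose[OF pair this] show ?thesis
    by (simp add: o_def)
qed

lemma lc_vector_topology_continuous_scale_left:
  assumes "lc_vector_topology S add sc T" and "x \<in> S"
  shows "continuous_map euclidean T (\<lambda>c. sc c x)"
proof -
  have "topspace T = S"
    using assms(1) by (simp add: lc_vector_topology_def)
  then have pair: "continuous_map euclidean (prod_topology euclidean T) (\<lambda>c. (c, x))"
    using assms(2) by (intro continuous_map_pairedI) auto
  have "continuous_map (prod_topology euclidean T) T (\<lambda>(c, x). sc c x)"
    using assms by (simp add: lc_vector_topology_def)
  from continuous_map_compose[OF pair this] show ?thesis
    by (simp add: o_def)
qed

lemma lc_vector_topology_small_multiples:
  assumes "lc_vector_topology S add sc T" and "x \<in> S" and "openin T W" "sc 0 x \<in> W"
  obtains \<delta> where "\<delta> > 0" "\<And>c. norm c < \<delta> \<Longrightarrow> sc c x \<in> W"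
proof -
  from openin_continuous_map_preimage[OF
      lc_vector_topology_continuous_scale_left[OF assms(1,2)] assms(3)]
  have "open {c. sc c x \<in> W}"
    by simp
  then obtain \<delta> where "\<delta> > 0" "ball 0 \<delta> \<subseteq> {c. sc c x \<in> W}"
    using assms(4) open_contains_ball by blast
  then show ?thesis
    using that[of \<delta>] by (auto simp: subset_iff)
qed

lemma istopology_norm_open:
  fixes N :: "'a::ab_group_add \<Rightarrow> real"
  shows "istopology (\<lambda>U. \<forall>x\<in>U. \<exists>e>0. \<forall>y. N (y - x) < e \<longrightarrow> y \<in> U)"
  unfolding istopology_def
proof (intro conjI allI impI)
  fix S T
  assume S: "\<forall>x\<in>S. \<exists>e>0. \<forall>y. N (y - x) < e \<longrightarrow> y \<in> S"
    and T: "\<forall>x\<in>T. \<exists>e>0. \<forall>y. N (y - x) < e \<longrightarrow> y \<in> T"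
  show "\<forall>x\<in>S \<inter> T. \<exists>e>0. \<forall>y. N (y - x) < e \<longrightarrow> y \<in> S \<inter> T"
  proof
    fix x
    assume "x \<in> S \<inter> T"
    then obtain e1 e2 where "e1 > 0" "\<forall>y. N (y - x) < e1 \<longrightarrow> y \<in> S"
      and "e2 > 0" "\<forall>y. N (y - x) < e2 \<longrightarrow> y \<in> T"
      using S T by blast
    then show "\<exists>e>0. \<forall>y. N (y - x) < e \<longrightarrow> y \<in> S \<inter> T"
      by (intro exI[of _ "min e1 e2"]) auto
  qed
next
  fix \<K> :: "'a set set"
  assume "\<forall>K\<in>\<K>. \<forall>x\<in>K. \<exists>e>0. \<forall>y. N (y - x) < e \<longrightarrow> y \<in> K"
  then show "\<forall>x\<in>\<Union>\<K>. \<exists>e>0. \<forall>y. N (y - x) < e \<longrightarrow> y \<in> \<Union>\<K>"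
    by (metis UnionE UnionI)
qed

locale locally_convex_space =
  fixes sc :: "'k::real_normed_field \<Rightarrow> 'v::ab_group_add \<Rightarrow> 'v" and T :: "'v topology"
  assumes lcs: "lcs sc T"
begin

sublocale vector_space sc
  using lcs by (simp add: lcs_def)

lemma lc_vector_topology: "lc_vector_topology UNIV (+) sc T"
  using lcs by (simp add: lcs_def)

lemma topspace_eq_UNIV [simp]: "topspace T = UNIV"
  using lc_vector_topology by (simp add: lc_vector_topology_def)

lemma Hausdorff: "Hausdorff_space T"
  using lcs by (simp add: lcs_def)

lemma convex_open_subset:
  "openin T U \<Longrightarrow> x \<in> U \<Longrightarrow> \<exists>V. openin T V \<and> convex_in (+) sc V \<and> x \<in> V \<and> V \<subseteq> U"
  using lc_vector_topology by (simp add: lc_vector_topology_def)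

lemma openin_affine_preimage:
  assumes "openin T W"
  shows "openin T {z. sc c (z - z0) \<in> W}"
proof -
  have "continuous_map T T (sc c \<circ> (\<lambda>z. z + (- z0)))"
    using lc_vector_topology_continuous_translate[OF lc_vector_topology]
      lc_vector_topology_continuous_scale[OF lc_vector_topology]
    by (rule continuous_map_compose) simp
  from openin_continuous_map_preimage[OF this assms] show ?thesis
    by (simp add: o_def)
qed

lemma absorbing:
  assumes "openin T B" "0 \<in> B"
  obtains t :: real where "t > 0" "sc (of_real t) y \<in> B"
proof -
  have "continuous_map euclidean euclidean (of_real :: real \<Rightarrow> 'k)"
    by (simp add: continuous_on_of_real continuous_on_id)
  from continuous_map_compose[OF this lc_vector_topology_continuous_scale_left[OF lc_vector_topology]]
  have "continuous_map euclidean T (\<lambda>t::real. sc (of_real t) y)"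
    by (simp add: o_def)
  from openin_continuous_map_preimage[OF this assms(1)]
  have "open {t::real. sc (of_real t) y \<in> B}"
    by simp
  moreover have "0 \<in> {t::real. sc (of_real t) y \<in> B}"
    using assms(2) by simp
  ultimately obtain e where "e > 0" "ball 0 e \<subseteq> {t::real. sc (of_real t) y \<in> B}"
    by (meson openE)
  moreover have "e / 2 \<in> ball 0 e" "0 < e / 2"
    using \<open>e > 0\<close> by simp_all
  ultimately show ?thesis
    using that[of "e / 2"] by blast
qed

definition balanced :: "'v set \<Rightarrow> bool" where
  "balanced M \<longleftrightarrow> (\<forall>c y. norm c \<le> 1 \<longrightarrow> y \<in> M \<longrightarrow> sc c y \<in> M)"

definition disk :: "'v set \<Rightarrow> bool" where
  "disk M \<longleftrightarrow> convex_in (+) sc M \<and> balanced M \<and> (\<exists>B. openin T B \<and> 0 \<in> B \<and> B \<subseteq> M)"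

definition balanced_core :: "'v set \<Rightarrow> 'v set" where
  "balanced_core W = {y. \<forall>c. norm c \<le> 1 \<longrightarrow> sc c y \<in> W}"

lemma balanced_core_subset: "balanced_core W \<subseteq> W"
  unfolding balanced_core_def by (force dest: spec[of _ 1])

lemma balanced_balanced_core: "balanced (balanced_core W)"
  unfolding balanced_def balanced_core_def by (auto simp: norm_mult mult_le_one)

lemma convex_balanced_core:
  assumes "convex_in (+) sc W"
  shows "convex_in (+) sc (balanced_core W)"
  unfolding convex_in_def balanced_core_def
proof (intro ballI allI impI CollectI, clarify)
  fix x y and t :: real and c :: 'k
  assume "\<forall>c. norm c \<le> 1 \<longrightarrow> sc c x \<in> W" "\<forall>c. norm c \<le> 1 \<longrightarrow> sc c y \<in> W"
    and "0 \<le> t" "t \<le> 1" "norm c \<le> 1"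
  then have "sc (of_real t) (sc c x) + sc (of_real (1 - t)) (sc c y) \<in> W"
    using assms unfolding convex_in_def by blast
  then show "sc c (sc (of_real t) x + sc (of_real (1 - t)) y) \<in> W"
    by (simp add: scale_right_distrib mult.commute)
qed

lemma balanced_core_neighbourhood:
  assumes W: "openin T W" "0 \<in> W"
  obtains B where "openin T B" "0 \<in> B" "B \<subseteq> balanced_core W"
proof -
  define P where "P = {x \<in> topspace (prod_topology euclidean T). (\<lambda>(c, x). sc c x) x \<in> W}"
  have "continuous_map (prod_topology euclidean T) T (\<lambda>(c, x). sc c x)"
    using lc_vector_topology by (simp add: lc_vector_topology_def)
  then have P: "openin (prod_topology euclidean T) P"
    unfolding P_def by (rule openin_continuous_map_preimage[OF _ W(1)])
  have P0: "((0::'k), 0) \<in> P"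
    using W(2) by (simp add: P_def)
  obtain C V where CV: "openin euclidean C" "openin T V" "(0::'k) \<in> C" "0 \<in> V" "C \<times> V \<subseteq> P"
    using P[unfolded openin_prod_topology_alt, rule_format, OF P0] by blast
  from CV(1,3) obtain \<delta> where \<delta>: "\<delta> > 0" "ball 0 \<delta> \<subseteq> C"
    by (auto simp: open_contains_ball)
  define B where "B = {y. sc (of_real (2 / \<delta>)) (y - 0) \<in> V}"
  have "B \<subseteq> balanced_core W"
    unfolding balanced_core_def
  proof (intro subsetI CollectI allI impI)
    fix y and c :: 'k
    assume "y \<in> B" "norm c \<le> 1"
    then have "norm (c * of_real (\<delta> / 2)) \<le> \<delta> / 2"
      using \<delta> by (simp add: norm_mult mult_left_le_one_le)
    then have "(c * of_real (\<delta> / 2), sc (of_real (2 / \<delta>)) y) \<in> C \<times> V"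
      using \<delta> \<open>y \<in> B\<close> by (auto simp: B_def intro!: subsetD[OF \<delta>(2)])
    with CV(5) have "sc (c * of_real (\<delta> / 2)) (sc (of_real (2 / \<delta>)) y) \<in> W"
      unfolding P_def by auto
    moreover have "c * of_real (\<delta> / 2) * of_real (2 / \<delta>) = c"
      using \<delta> by (simp add: mult.assoc flip: of_real_mult)
    ultimately show "sc c y \<in> W"
      by simp
  qed
  moreover have "openin T B"
    unfolding B_def by (rule openin_affine_preimage[OF CV(2)])
  moreover have "0 \<in> B"
    using CV(4) by (simp add: B_def)
  ultimately show ?thesis
    using that by blast
qed

lemma disk_subset:
  assumes "openin T U" "0 \<in> U"
  obtains M where "disk M" "M \<subseteq> U"
proof -
  obtain W where W: "openin T W" "convex_in (+) sc W" "0 \<in> W" "W \<subseteq> U"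
    using convex_open_subset[OF assms] by blast
  then have "disk (balanced_core W)"
    unfolding disk_def using convex_balanced_core balanced_balanced_core
      balanced_core_neighbourhood[OF W(1,3)] by metis
  then show ?thesis
    using that balanced_core_subset W(4) by blast
qed

definition minkowski :: "'v set \<Rightarrow> 'v \<Rightarrow> real" where
  "minkowski M y = Inf {t. 0 < t \<and> sc (of_real (1 / t)) y \<in> M}"

definition von_neumann_bounded :: "'v set \<Rightarrow> bool" where
  "von_neumann_bounded M \<longleftrightarrow> (\<forall>W. openin T W \<longrightarrow> 0 \<in> W \<longrightarrow> (\<exists>t>0. \<forall>y\<in>M. sc (of_real t) y \<in> W))"

definition weakly_bounded :: "'v set \<Rightarrow> bool" where
  "weakly_bounded M \<longleftrightarrow> (\<forall>f. Vector_Spaces.linear sc (*) f \<longrightarrow> continuous_map T euclidean f \<longrightarrow>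
     (\<exists>B. \<forall>y\<in>M. norm (f y) \<le> B))"

context
  fixes M
  assumes disk: "disk M"
begin

lemma zero_in_disk: "0 \<in> M"
  using disk by (auto simp: disk_def)

lemma disk_scale: "norm c \<le> 1 \<Longrightarrow> y \<in> M \<Longrightarrow> sc c y \<in> M"
  using disk by (simp add: disk_def balanced_def)

lemma minkowski_set_nonempty: "\<exists>t. 0 < t \<and> sc (of_real (1 / t)) y \<in> M"
proof -
  obtain B where B: "openin T B" "0 \<in> B" "B \<subseteq> M"
    using disk by (auto simp: disk_def)
  obtain t where "t > 0" "sc (of_real t) y \<in> B"
    using absorbing[OF B(1,2)] by blast
  then show ?thesis
    using B(3) by (intro exI[of _ "1 / t"]) auto
qed

lemma minkowski_set_upward:
  assumes "0 < s" "sc (of_real (1 / s)) y \<in> M" "s \<le> s'"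
  shows "sc (of_real (1 / s')) y \<in> M"
proof -
  have "s / s' \<le> 1" "0 \<le> s / s'"
    using assms by (auto simp: divide_le_eq)
  then have "norm (of_real (s / s') :: 'k) \<le> 1"
    by (simp only: norm_of_real abs_of_nonneg)
  then have "sc (of_real (s / s')) (sc (of_real (1 / s)) y) \<in> M"
    using disk_scale assms(2) by blast
  moreover have "(s / s') * (1 / s) = 1 / s'"
    using assms by simp
  then have "(of_real (s / s') :: 'k) * of_real (1 / s) = of_real (1 / s')"
    by (simp only: of_real_mult[symmetric])
  ultimately show ?thesis
    by simp
qed

lemma minkowski_nonneg: "0 \<le> minkowski M y"
  unfolding minkowski_def using minkowski_set_nonempty[of y] by (intro cInf_greatest) auto

lemma minkowski_le:
  assumes "0 < s" "sc (of_real (1 / s)) y \<in> M"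
  shows "minkowski M y \<le> s"
  unfolding minkowski_def using assms by (intro cInf_lower bdd_belowI[of _ 0]) auto

lemma minkowski_le_1: "y \<in> M \<Longrightarrow> minkowski M y \<le> 1"
  using minkowski_le[of 1 y] by simp

lemma mem_if_minkowski_less:
  assumes "minkowski M y < s"
  shows "sc (of_real (1 / s)) y \<in> M"
proof -
  have "\<exists>t\<in>{t. 0 < t \<and> sc (of_real (1 / t)) y \<in> M}. t < s"
    using assms minkowski_set_nonempty[of y] unfolding minkowski_def by (intro cInf_lessD) auto
  then obtain t where "0 < t" "sc (of_real (1 / t)) y \<in> M" "t < s"
    by blast
  then show ?thesis
    using minkowski_set_upward by auto
qed

lemma minkowski_zero [simp]: "minkowski M 0 = 0"
proof -
  have "{t. 0 < t \<and> sc (of_real (1 / t)) 0 \<in> M} = {0<..}"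
    using zero_in_disk by auto
  then show ?thesis
    by (simp add: minkowski_def)
qed

lemma minkowski_scale_le: "minkowski M (sc c y) \<le> norm c * minkowski M y"
proof (cases "c = 0")
  case False
  have "minkowski M (sc c y) / norm c \<le> minkowski M y"
  proof (rule dense_ge)
    fix s
    assume s: "minkowski M y < s"
    then have "0 < s"
      using minkowski_nonneg[of y] by linarith
    have "norm (c / of_real (norm c)) \<le> 1"
      using False by (simp add: norm_divide)
    then have "sc (c / of_real (norm c)) (sc (of_real (1 / s)) y) \<in> M"
      using disk_scale mem_if_minkowski_less[OF s] by blast
    moreover have "c / of_real (norm c) * of_real (1 / s) = of_real (1 / (norm c * s)) * c"
      using False by (simp add: field_simps)
    ultimately have "sc (of_real (1 / (norm c * s))) (sc c y) \<in> M"
      by simp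
    then have "minkowski M (sc c y) \<le> norm c * s"
      using False \<open>0 < s\<close> by (intro minkowski_le) auto
    then show "minkowski M (sc c y) / norm c \<le> s"
      using False by (simp add: divide_le_eq mult.commute)
  qed
  then show ?thesis
    using False by (simp add: divide_le_eq mult.commute)
qed simp

lemma minkowski_scale: "minkowski M (sc c y) = norm c * minkowski M y"
proof (cases "c = 0")
  case False
  have "minkowski M y = minkowski M (sc (inverse c) (sc c y))"
    using False by simp
  also have "\<dots> \<le> norm (inverse c) * minkowski M (sc c y)"
    by (rule minkowski_scale_le)
  finally have "norm c * minkowski M y \<le> norm c * (norm (inverse c) * minkowski M (sc c y))"
    by (intro mult_left_mono) auto
  also have "\<dots> = minkowski M (sc c y)"
    using False by (simp add: norm_inverse)
  finally have "norm c * minkowski M y \<le> minkowski M (sc c y)" .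
  then show ?thesis
    using minkowski_scale_le[of c y] by simp
qed simp

lemma minkowski_triangle: "minkowski M (x + y) \<le> minkowski M x + minkowski M y"
proof -
  have "minkowski M (x + y) \<le> s1 + s2" if s1: "minkowski M x < s1" and s2: "minkowski M y < s2"
    for s1 s2
  proof -
    have "0 < s1" "0 < s2"
      using s1 s2 minkowski_nonneg[of x] minkowski_nonneg[of y] by linarith+
    define t where "t = s1 / (s1 + s2)"
    have "0 \<le> t" "t \<le> 1"
      using \<open>0 < s1\<close> \<open>0 < s2\<close> by (auto simp: t_def)
    then have "sc (of_real t) (sc (of_real (1 / s1)) x) + sc (of_real (1 - t)) (sc (of_real (1 / s2)) y) \<in> M"
      using disk mem_if_minkowski_less[OF s1] mem_if_minkowski_less[OF s2]
      unfolding disk_def convex_in_def by blast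
    moreover have "(of_real t :: 'k) * of_real (1 / s1) = of_real (1 / (s1 + s2))"
      and "(of_real (1 - t) :: 'k) * of_real (1 / s2) = of_real (1 / (s1 + s2))"
      using \<open>0 < s1\<close> \<open>0 < s2\<close> by (simp_all add: t_def field_simps flip: of_real_mult)
    ultimately have "sc (of_real (1 / (s1 + s2))) (x + y) \<in> M"
      by (simp add: scale_right_distrib)
    then show ?thesis
      using \<open>0 < s1\<close> \<open>0 < s2\<close> by (intro minkowski_le) auto
  qed
  then have "minkowski M (x + y) - minkowski M y \<le> s1" if "minkowski M x < s1" for s1
    using that by (metis dense_ge diff_le_eq add.commute)
  then show ?thesis
    using dense_ge by (metis diff_le_eq)
qed

lemma minkowski_norming:
  obtains u where "Vector_Spaces.linear (\<lambda>t. sc (of_real t)) (*) u"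
    "\<And>z. \<bar>u z\<bar> \<le> minkowski M z" "u y = minkowski M y"
proof -
  interpret real: sublinear_functional "\<lambda>t. sc (of_real t)" "minkowski M"
    by unfold_locales
      (simp_all add: scale_left_distrib scale_right_distrib minkowski_triangle minkowski_scale)
  obtain u where u: "Vector_Spaces.linear (\<lambda>t. sc (of_real t)) (*) u"
    "\<And>x. u x \<le> minkowski M x" "u y = minkowski M y"
    using real.Hahn_Banach[of y] by blast
  have "- u z \<le> minkowski M z" for z
  proof -
    have "- u z = u (sc (of_real (- 1)) z)"
      using u(1) unfolding Vector_Spaces.linear_iff by (metis mult_minus1)
    also have "\<dots> \<le> minkowski M (sc (of_real (- 1)) z)"
      by (rule u(2))
    also have "\<dots> = minkowski M z"
      by (simp only: minkowski_scale norm_of_real)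
    finally show ?thesis .
  qed
  then have "\<bar>u z\<bar> \<le> minkowski M z" for z
    using u(2)[of z] by (simp add: abs_le_iff)
  then show ?thesis
    using that u(1,3) by blast
qed

lemma minkowski_ball_neighbourhood:
  assumes "0 < e"
  shows "\<exists>U. openin T U \<and> x \<in> U \<and> (\<forall>z\<in>U. minkowski M (z - x) < e)"
proof -
  obtain B where B: "openin T B" "0 \<in> B" "B \<subseteq> M"
    using disk by (auto simp: disk_def)
  define U where "U = {z. sc (of_real (2 / e)) (z - x) \<in> B}"
  have "minkowski M (z - x) < e" if "z \<in> U" for z
  proof -
    have "minkowski M (sc (of_real (2 / e)) (z - x)) \<le> 1"
      using B(3) that by (intro minkowski_le_1) (auto simp: U_def)
    then have "\<bar>2 / e\<bar> * minkowski M (z - x) \<le> 1"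
      by (simp only: minkowski_scale norm_of_real)
    then show ?thesis
      using \<open>0 < e\<close> minkowski_nonneg[of "z - x"] by (simp add: field_simps)
  qed
  moreover have "openin T U"
    unfolding U_def by (rule openin_affine_preimage[OF B(1)])
  moreover have "x \<in> U"
    using B(2) by (simp add: U_def)
  ultimately show ?thesis
    by blast
qed

lemma continuous_map_if_minkowski_bound:
  assumes add: "\<And>x y. u (x + y) = u x + u y" and bound: "\<And>z. \<bar>u z\<bar> \<le> C * minkowski M z"
  shows "continuous_map T euclidean u"
  unfolding continuous_map_def
proof (intro conjI allI impI)
  show "u \<in> topspace T \<rightarrow> topspace euclidean"
    by simp
  fix S :: "real set"
  assume "openin euclidean S"
  then have "open S"
    by simp
  show "openin T {x \<in> topspace T. u x \<in> S}"
  proof (subst openin_subopen, intro ballI)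
    fix x
    assume "x \<in> {x \<in> topspace T. u x \<in> S}"
    then have "u x \<in> S"
      by simp
    then obtain \<epsilon> where "\<epsilon> > 0" and \<epsilon>: "ball (u x) \<epsilon> \<subseteq> S"
      using \<open>open S\<close> open_contains_ball by blast
    define \<delta> where "\<delta> = \<epsilon> / (\<bar>C\<bar> + 1)"
    have "0 < \<delta>"
      using \<open>\<epsilon> > 0\<close> by (simp add: \<delta>_def add_pos_nonneg)
    then obtain U where U: "openin T U" "x \<in> U" and small: "\<forall>z\<in>U. minkowski M (z - x) < \<delta>"
      using minkowski_ball_neighbourhood by blast
    have "u z \<in> S" if "z \<in> U" for z
    proof -
      have "\<bar>u z - u x\<bar> \<le> C * minkowski M (z - x)"
        using bound[of "z - x"] add[of "z - x" x] by simp
      also have "\<dots> \<le> (\<bar>C\<bar> + 1) * minkowski M (z - x)"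
        using minkowski_nonneg[of "z - x"] by (intro mult_right_mono) auto
      also have "\<dots> < \<epsilon>"
        using small that by (simp add: \<delta>_def pos_less_divide_eq add_pos_nonneg mult.commute)
      finally show ?thesis
        using \<epsilon> by (auto simp: dist_real_def)
    qed
    then have "U \<subseteq> {x \<in> topspace T. u x \<in> S}"
      by auto
    with U show "\<exists>U. openin T U \<and> x \<in> U \<and> U \<subseteq> {x \<in> topspace T. u x \<in> S}"
      by blast
  qed
qed

lemma is_norm_minkowski:
  assumes "von_neumann_bounded M"
  shows "is_norm sc (minkowski M)"
  unfolding is_norm_def
proof (intro conjI allI impI)
  fix x
  assume "minkowski M x = 0"
  show "x = 0"
  proof (rule ccontr)
    assume "x \<noteq> 0"
    then have "\<exists>U V. openin T U \<and> openin T V \<and> 0 \<in> U \<and> x \<in> V \<and> disjnt U V"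
      using Hausdorff unfolding Hausdorff_space_def by simp
    then obtain U V where UV: "openin T U" "openin T V" "0 \<in> U" "x \<in> V" "disjnt U V"
      by blast
    then obtain t where "t > 0" and t: "\<forall>y\<in>M. sc (of_real t) y \<in> U"
      using assms unfolding von_neumann_bounded_def by blast
    then have "sc (of_real (1 / t)) x \<in> M"
      using \<open>minkowski M x = 0\<close> by (intro mem_if_minkowski_less) simp
    then have "sc (of_real t) (sc (of_real (1 / t)) x) \<in> U"
      using t by blast
    then have "x \<in> U"
      using \<open>t > 0\<close> by simp
    then show False
      using UV(4,5) by (auto simp: disjnt_def)
  qed
qed (simp_all add: minkowski_nonneg minkowski_scale minkowski_triangle)

lemma minkowski_ball_subset_if_openin:
  assumes "von_neumann_bounded M" and "openin T S" "x \<in> S"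
  obtains e where "e > 0" "\<And>y. minkowski M (y - x) < e \<Longrightarrow> y \<in> S"
proof -
  have "openin T {z. sc 1 (z - (- x)) \<in> S}"
    by (rule openin_affine_preimage[OF \<open>openin T S\<close>])
  moreover have "0 \<in> {z. sc 1 (z - (- x)) \<in> S}"
    using \<open>x \<in> S\<close> by simp
  ultimately obtain t where "t > 0" and t: "\<forall>y\<in>M. sc (of_real t) y \<in> {z. sc 1 (z - (- x)) \<in> S}"
    using assms(1) unfolding von_neumann_bounded_def by blast
  have "y \<in> S" if "minkowski M (y - x) < t" for y
  proof -
    have "sc (of_real (1 / t)) (y - x) \<in> M"
      using that by (rule mem_if_minkowski_less)
    then have "sc (of_real t) (sc (of_real (1 / t)) (y - x)) \<in> {z. sc 1 (z - (- x)) \<in> S}"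
      using t by blast
    then show ?thesis
      using \<open>t > 0\<close> by simp
  qed
  then show ?thesis
    using that \<open>t > 0\<close> by blast
qed

lemma norm_topology_minkowski:
  assumes "von_neumann_bounded M"
  shows "T = norm_topology (minkowski M)"
  unfolding norm_topology_def topology_eq topology_inverse'[OF istopology_norm_open]
proof (intro allI iffI)
  fix S
  assume "openin T S"
  then show "\<forall>x\<in>S. \<exists>e>0. \<forall>y. minkowski M (y - x) < e \<longrightarrow> y \<in> S"
    using minkowski_ball_subset_if_openin[OF assms] by blast
next
  fix S
  assume S: "\<forall>x\<in>S. \<exists>e>0. \<forall>y. minkowski M (y - x) < e \<longrightarrow> y \<in> S"
  show "openin T S"
  proof (subst openin_subopen, intro ballI)
    fix x
    assume "x \<in> S"
    then obtain e where "e > 0" and e: "\<forall>y. minkowski M (y - x) < e \<longrightarrow> y \<in> S"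
      using S by blast
    then obtain U where "openin T U" "x \<in> U" "\<forall>z\<in>U. minkowski M (z - x) < e"
      using minkowski_ball_neighbourhood[where x = x] by blast
    then show "\<exists>U. openin T U \<and> x \<in> U \<and> U \<subseteq> S"
      using e by blast
  qed
qed

lemma normable_if_von_neumann_bounded: "von_neumann_bounded M \<Longrightarrow> normable sc T"
  unfolding normable_def using is_norm_minkowski norm_topology_minkowski by blast

end

lemma real_functional_bounded_if_weakly_bounded:
  assumes "weakly_bounded M" and D: "disk D"
    and u: "Vector_Spaces.linear (\<lambda>t. sc (of_real t)) (*) u"
    and bound: "\<And>z. \<bar>u z\<bar> \<le> C * minkowski D z"
  shows "\<exists>B. \<forall>y\<in>M. \<bar>u y\<bar> \<le> B"
proof -
  have "continuous_map T euclidean u"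
    using u bound by (intro continuous_map_if_minkowski_bound[OF D]) (auto simp: Vector_Spaces.linear_iff)
  then have "continuous_map T euclidean (complexify sc u)"
    by (rule continuous_map_complexify[OF _ lc_vector_topology_continuous_scale[OF lc_vector_topology]])
  moreover have "Vector_Spaces.linear sc (*) (complexify sc u)"
    by (rule complexify_linear[OF vector_space_axioms u])
  ultimately obtain B where "\<forall>y\<in>M. norm (complexify sc u y) \<le> B"
    using assms(1) unfolding weakly_bounded_def by blast
  then have "\<forall>y\<in>M. \<bar>u y\<bar> \<le> 2 * B"
    using abs_le_norm_complexify by (smt (verit))
  then show ?thesis ..
qed

lemma von_neumann_bounded_if_weakly_bounded:
  assumes "weakly_bounded M"
  shows "von_neumann_bounded M"
  unfolding von_neumann_bounded_def
proof (intro allI impI)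
  fix W
  assume "openin T W" "0 \<in> W"
  then obtain D where D: "disk D" "D \<subseteq> W"
    by (rule disk_subset)
  have "\<exists>R. \<forall>y\<in>M. minkowski D y \<le> R"
  proof (rule seminorm_bounded_if_functionals_bounded[where scale = "\<lambda>t. sc (of_real t)"])
    show "\<exists>u. Vector_Spaces.linear (\<lambda>t. sc (of_real t)) (*) u \<and> (\<forall>z. \<bar>u z\<bar> \<le> minkowski D z) \<and>
        u y = minkowski D y" for y
      using minkowski_norming[OF D(1)] by metis
  qed (rule real_functional_bounded_if_weakly_bounded[OF assms D(1)])
  then obtain R where R: "\<And>y. y \<in> M \<Longrightarrow> minkowski D y \<le> R"
    by blast
  define t where "t = 1 / (\<bar>R\<bar> + 1)"
  have "0 < t"
    by (simp add: t_def add_pos_nonneg)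
  have "sc (of_real t) y \<in> W" if "y \<in> M" for y
  proof -
    have "minkowski D (sc (of_real t) y) = t * minkowski D y"
      using \<open>0 < t\<close> by (simp add: minkowski_scale[OF D(1)])
    also have "\<dots> < 1"
      using R[OF that] \<open>0 < t\<close> by (simp add: t_def field_simps)
    finally have "sc (of_real (1 / 1)) (sc (of_real t) y) \<in> D"
      by (rule mem_if_minkowski_less[OF D(1)])
    then show ?thesis
      using D(2) by auto
  qed
  then show "\<exists>t>0. \<forall>y\<in>M. sc (of_real t) y \<in> W"
    using \<open>0 < t\<close> by blast
qed

end

section \<open>Composition of continuous linear maps\<close>

lemma rank_one_in_cont_lin:
  assumes F: "lcs sF TF" and G: "lcs sG TG"
    and f: "Vector_Spaces.linear sF (*) f" "continuous_map TF euclidean f"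
  shows "(\<lambda>y. sG (f y) g) \<in> cont_lin sF TF sG TG"
proof -
  interpret F: locally_convex_space sF TF by unfold_locales fact
  interpret G: locally_convex_space sG TG by unfold_locales fact
  have "Vector_Spaces.linear sF sG (\<lambda>y. sG (f y) g)"
    using f(1) F.vector_space_axioms G.vector_space_axioms
    by (simp add: Vector_Spaces.linear_iff G.scale_left_distrib)
  moreover have "continuous_map TF TG (\<lambda>y. sG (f y) g)"
    using continuous_map_compose[OF f(2) lc_vector_topology_continuous_scale_left[OF G.lc_vector_topology]]
    by (simp add: o_def)
  ultimately show ?thesis
    by (simp add: cont_lin_def)
qed

lemma continuous_evaluation_if_continuous_composition:
  fixes l :: "'e \<Rightarrow> 'k::real_normed_field" and sF :: "'k \<Rightarrow> 'f::ab_group_add \<Rightarrow> 'f"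
    and T1 :: "('f \<Rightarrow> 'g) topology" and T2 :: "('e \<Rightarrow> 'f) topology"
  assumes F: "lcs sF TF" and "l x \<noteq> 0"
    and compose: "continuous_map (prod_topology T1 T2) T3 (\<lambda>(A, B). A \<circ> B)"
    and tensor: "continuous_map TF T2 (\<lambda>y. \<lambda>z. sF (l z) y)"
    and eval: "continuous_map T3 TG (\<lambda>A. A x)"
  shows "continuous_map (prod_topology T1 TF) TG (\<lambda>(A, y). A y)"
proof -
  interpret F: locally_convex_space sF TF by unfold_locales fact
  define c where "c = inverse (l x)"
  have "continuous_map (prod_topology T1 TF) TF (\<lambda>p. sF c (snd p))"
    using continuous_map_compose[OF continuous_map_snd
        lc_vector_topology_continuous_scale[OF F.lc_vector_topology]] by (simp add: o_def)
  from continuous_map_compose[OF this tensor]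
  have "continuous_map (prod_topology T1 TF) T2 (\<lambda>p. \<lambda>z. sF (l z) (sF c (snd p)))"
    by (simp add: o_def)
  then have "continuous_map (prod_topology T1 TF) (prod_topology T1 T2)
      (\<lambda>p. (fst p, \<lambda>z. sF (l z) (sF c (snd p))))"
    by (intro continuous_map_pairedI continuous_map_fst)
  from continuous_map_compose[OF continuous_map_compose[OF this compose] eval]
  have "continuous_map (prod_topology T1 TF) TG (\<lambda>p. fst p (sF (l x) (sF c (snd p))))"
    by (simp add: o_def case_prod_beta)
  moreover have "sF (l x) (sF c y) = y" for y
    using \<open>l x \<noteq> 0\<close> by (simp add: c_def)
  ultimately show ?thesis
    by (simp add: split_def)
qed

lemma weakly_bounded_if_evaluation_avoids:
  assumes F: "lcs sF TF" and G: "lcs sG TG"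
    and T1: "lc_vector_topology (cont_lin sF TF sG TG) fadd (fscale sG) T1"
    and W: "openin T1 W" "(\<lambda>_. 0) \<in> W" and "g \<notin> V"
    and avoids: "\<And>A y. A \<in> W \<Longrightarrow> y \<in> U \<Longrightarrow> A y \<in> V"
  shows "locally_convex_space.weakly_bounded sF TF U"
proof -
  interpret F: locally_convex_space sF TF by unfold_locales fact
  interpret G: locally_convex_space sG TG by unfold_locales fact
  show ?thesis
    unfolding F.weakly_bounded_def
  proof (intro allI impI)
    fix f
    assume f: "Vector_Spaces.linear sF (*) f" "continuous_map TF euclidean f"
    define A where "A = (\<lambda>y. sG (f y) g)"
    have "A \<in> cont_lin sF TF sG TG"
      unfolding A_def by (rule rank_one_in_cont_lin[OF F G f])
    moreover have "fscale sG 0 A \<in> W"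
      using W(2) by (simp add: fscale_def)
    ultimately obtain \<delta> where "\<delta> > 0" and \<delta>: "\<And>c. norm c < \<delta> \<Longrightarrow> fscale sG c A \<in> W"
      using lc_vector_topology_small_multiples[OF T1 _ W(1)] by blast
    have "norm (f y) \<le> 1 / \<delta>" if "y \<in> U" for y
    proof (rule ccontr)
      assume "\<not> norm (f y) \<le> 1 / \<delta>"
      then have "inverse (norm (f y)) < inverse (1 / \<delta>)"
        using \<open>\<delta> > 0\<close> by (intro less_imp_inverse_less) auto
      then have "f y \<noteq> 0" "norm (inverse (f y)) < \<delta>"
        using \<open>\<not> norm (f y) \<le> 1 / \<delta>\<close> \<open>\<delta> > 0\<close> by (auto simp: norm_inverse)
      then have "fscale sG (inverse (f y)) A \<in> W"
        using \<delta> by blast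
      then have "fscale sG (inverse (f y)) A y \<in> V"
        using avoids that by blast
      moreover have "fscale sG (inverse (f y)) A y = g"
        using \<open>f y \<noteq> 0\<close> by (simp add: fscale_def A_def)
      ultimately show False
        using \<open>g \<notin> V\<close> by simp
    qed
    then show "\<exists>B. \<forall>y\<in>U. norm (f y) \<le> B"
      by blast
  qed
qed

lemma normable_if_continuous_evaluation:
  fixes sF :: "'k::real_normed_field \<Rightarrow> 'f::ab_group_add \<Rightarrow> 'f"
    and sG :: "'k \<Rightarrow> 'g::ab_group_add \<Rightarrow> 'g" and g :: 'g
  assumes F: "lcs sF TF" and G: "lcs sG TG" and "g \<noteq> 0"
    and T1: "lc_vector_topology (cont_lin sF TF sG TG) fadd (fscale sG) T1"
    and eval: "continuous_map (prod_topology T1 TF) TG (\<lambda>(A, y). A y)"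
  shows "normable sF TF"
proof -
  interpret F: locally_convex_space sF TF by unfold_locales fact
  interpret G: locally_convex_space sG TG by unfold_locales fact
  have "\<exists>V0 V1. openin TG V0 \<and> openin TG V1 \<and> 0 \<in> V0 \<and> g \<in> V1 \<and> disjnt V0 V1"
    using G.Hausdorff \<open>g \<noteq> 0\<close> unfolding Hausdorff_space_def by simp
  then obtain V where V: "openin TG V" "0 \<in> V" "g \<notin> V"
    unfolding disjnt_iff by blast
  have zero: "(\<lambda>_. 0) \<in> cont_lin sF TF sG TG"
    using F.vector_space_axioms G.vector_space_axioms
    by (simp add: cont_lin_def Vector_Spaces.linear_iff)
  define P where "P = {p \<in> topspace (prod_topology T1 TF). (\<lambda>(A, y). A y) p \<in> V}"
  have P: "openin (prod_topology T1 TF) P"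
    unfolding P_def by (rule openin_continuous_map_preimage[OF eval V(1)])
  have "topspace T1 = cont_lin sF TF sG TG"
    using T1 by (simp add: lc_vector_topology_def)
  then have P0: "((\<lambda>_. 0), 0) \<in> P"
    using zero V(2) by (simp add: P_def)
  obtain W U where W: "openin T1 W" "(\<lambda>_. 0) \<in> W" and U: "openin TF U" "0 \<in> U"
    and "W \<times> U \<subseteq> P"
    using P[unfolded openin_prod_topology_alt, rule_format, OF P0] by blast
  obtain M where "F.disk M" "M \<subseteq> U"
    using F.disk_subset[OF U] by blast
  have "A y \<in> V" if "A \<in> W" "y \<in> M" for A y
  proof -
    have "(A, y) \<in> P"
      using that \<open>M \<subseteq> U\<close> \<open>W \<times> U \<subseteq> P\<close> by blast
    then show ?thesis
      by (simp add: P_def)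
  qed
  then have "F.weakly_bounded M"
    by (rule weakly_bounded_if_evaluation_avoids[OF F G T1 W V(3)])
  then show ?thesis
    using F.normable_if_von_neumann_bounded[OF \<open>F.disk M\<close>] F.von_neumann_bounded_if_weakly_bounded by blast
qed

theorem mainTheorem5:
  fixes sE :: "'k::real_normed_field \<Rightarrow> 'e::ab_group_add \<Rightarrow> 'e"
    and sF :: "'k \<Rightarrow> 'f::ab_group_add \<Rightarrow> 'f"
    and sG :: "'k \<Rightarrow> 'g::ab_group_add \<Rightarrow> 'g"
    and TE :: "'e topology" and TF :: "'f topology" and TG :: "'g topology"
    and T1 :: "('f \<Rightarrow> 'g) topology" and T2 :: "('e \<Rightarrow> 'f) topology"
    and T3 :: "('e \<Rightarrow> 'g) topology"
  assumes E: "lcs sE TE" and F: "lcs sF TF" and G: "lcs sG TG"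
    and F_nonnormable: "\<not> normable sF TF"
    and E_nontriv: "\<exists>x::'e. x \<noteq> 0" and G_nontriv: "\<exists>y::'g. y \<noteq> 0"
    and T1: "lc_vector_topology (cont_lin sF TF sG TG) fadd (fscale sG) T1"
    and T2: "lc_vector_topology (cont_lin sE TE sF TF) fadd (fscale sF) T2"
    and T3: "lc_vector_topology (cont_lin sE TE sG TG) fadd (fscale sG) T3"
    and cont: "\<exists>l\<in>dual sE TE. \<exists>x. l x \<noteq> 0 \<and>
                 continuous_map TF T2 (\<lambda>y. \<lambda>z. sF (l z) y) \<and>
                 continuous_map T3 TG (\<lambda>A. A x)"
  shows "\<not> continuous_map (prod_topology T1 T2) T3 (\<lambda>(A, B). A \<circ> B)"
proof
  assume compose: "continuous_map (prod_topology T1 T2) T3 (\<lambda>(A, B). A \<circ> B)"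
  obtain l x where "l x \<noteq> 0" and tensor: "continuous_map TF T2 (\<lambda>y. \<lambda>z. sF (l z) y)"
    and eval: "continuous_map T3 TG (\<lambda>A. A x)"
    using cont by blast
  obtain g :: 'g where "g \<noteq> 0"
    using G_nontriv by blast
  have "continuous_map (prod_topology T1 TF) TG (\<lambda>(A, y). A y)"
    by (rule continuous_evaluation_if_continuous_composition[OF F \<open>l x \<noteq> 0\<close> compose tensor eval])
  then have "normable sF TF"
    by (rule normable_if_continuous_evaluation[OF F G \<open>g \<noteq> 0\<close> T1])
  with F_nonnormable show False
    by contradiction
qed

end
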